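(* Let $V,H,K$ be complex Hilbert spaces such that $V$ is embedded in $H$ with compact inclusion map $i\colon V\to H$, and let $j\colon V\to K$ be a compact linear map. Let $\mathfrak a\colon V\times V\to\mathbb C$ be a positive, symmetric, continuous, $i$-elliptic sesquilinear form, and put $V_D=\ker j$. Let $A^N$ be the self-adjoint operator in $\overline V$ (closure in $H$) associated with $\mathfrak a$, and $A^D$ the self-adjoint operator in $\overline{V_D}$ (closure in $H$) associated with $\mathfrak a|_{V_D\times V_D}$. For $\lambda\in\mathbb R$ let $\mathfrak b_\lambda(u,v)=\mathfrak a(u,v)-\lambda (u,v)_H$ and let $\mathcal N_\lambda$ be the graph associated with $(\mathfrak b_\lambda,j)$. Suppose (I) $A^N$ has no eigenvector belonging to $V_D$, and (II) for every $\lambda\in(0,\infty)$, $\dim\operatorname{span}\{\varphi\in D(\mathcal N_\lambda): (\mathcal N_\lambda^\circ\varphi,\varphi)_K=0\}=\infty$. Let $\lambda_1^N\le\lambda_2^N\le\dots$ and $\lambda_1^D\le\lambda_2^D\le\dots$ be the eigenvalues of $A^N$ and $A^D$, repeated with multiplicity. Then $\lambda^N_{n+1}<\lambda^D_n$ for all $n\in\mathbb N$.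
   Context: A sesquilinear form $\mathfrak a$ on $V$ is positive if $\mathfrak a(u,u)\ge 0$ for all $u$, symmetric if $\mathfrak a(v,u)=\overline{\mathfrak a(u,v)}$, continuous if $|\mathfrak a(u,v)|\le M\|u\|_V\|v\|_V$ for some $M$, and $i$-elliptic if there are $\omega,\delta>0$ with $\mathfrak a(u,u)+\omega\|i(u)\|_H^2\ge\delta\|u\|_V^2$ for all $u\in V$. For a closed subspace $W\subset V$ and a continuous symmetric $i$-elliptic form $\mathfrak c$ on $W$, the self-adjoint operator in $\overline W$ (closure in $H$) associated with $\mathfrak c$ is defined by: $u\in D(B)$ and $Bu=f$ iff $u\in W$, $f\in\overline W$ and $\mathfrak c(u,v)=(f,v)_H$ for all $v\in W$; it is self-adjoint, bounded below, with compact resolvent (since $i$ is compact). The graph associated with $(\mathfrak b_\lambda,j)$ is $\mathcal N_\lambda=\{(j(u),\psi)\in K\times K: u\in V,\ \mathfrak b_\lambda(u,v)=(\psi,j(v))_K \text{ for all } v\in V\}$; it is a self-adjoint graph (linear relation) in $K$, bounded below, with compact resolvent. Its domain is $D(\mathcal N_\lambda)=\{\varphi: \exists\psi,\ (\varphi,\psi)\in\mathcal N_\lambda\}$, and its single-valued part $\mathcal N_\lambda^\circ$ is the self-adjoint operator in the Hilbert space $\overline{D(\mathcal N_\lambda)}$ (closure in $K$) whose graph is $\mathcal N_\lambda\cap(\overline{D(\mathcal N_\lambda)}\times\overline{D(\mathcal N_\lambda)})$; $D(\mathcal N_\lambda^\circ)=D(\mathcal N_\lambda)$. *)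

theory Defs
  imports Complex_Main "HOL-Library.Extended_Nat"
begin

text \<open>No complex inner product spaces exist in the distribution, so a complex Hilbert
space is represented by a type 'a (an additive group) together with a scalar
multiplication sc :: complex => 'a => 'a and an inner product ip :: 'a => 'a => complex,
linear in the first and conjugate-linear in the second argument.\<close>

definition nrm :: "('a \<Rightarrow> 'a \<Rightarrow> complex) \<Rightarrow> 'a \<Rightarrow> real" where
  "nrm ip x = sqrt (Re (ip x x))"

definition conv :: "('a::ab_group_add \<Rightarrow> 'a \<Rightarrow> complex) \<Rightarrow> (nat \<Rightarrow> 'a) \<Rightarrow> 'a \<Rightarrow> bool" where
  "conv ip xs y \<longleftrightarrow> (\<lambda>n. nrm ip (xs n - y)) \<longlonglongrightarrow> 0"

definition chilbert :: "(complex \<Rightarrow> 'a::ab_group_add \<Rightarrow> 'a) \<Rightarrow> ('a \<Rightarrow> 'a \<Rightarrow> complex) \<Rightarrow> bool" where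
  "chilbert sc ip \<longleftrightarrow>
     (\<forall>c x y. sc c (x + y) = sc c x + sc c y) \<and>
     (\<forall>c d x. sc (c + d) x = sc c x + sc d x) \<and>
     (\<forall>c d x. sc (c * d) x = sc c (sc d x)) \<and>
     (\<forall>x. sc 1 x = x) \<and>
     (\<forall>x y z. ip (x + y) z = ip x z + ip y z) \<and>
     (\<forall>c x y. ip (sc c x) y = c * ip x y) \<and>
     (\<forall>x y. ip y x = cnj (ip x y)) \<and>
     (\<forall>x. Re (ip x x) \<ge> 0) \<and>
     (\<forall>x. ip x x = 0 \<longrightarrow> x = 0) \<and>
     (\<forall>xs. (\<forall>e>0. \<exists>N. \<forall>m\<ge>N. \<forall>n\<ge>N. nrm ip (xs m - xs n) < e) \<longrightarrow> (\<exists>y. conv ip xs y))"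

definition clinear_map :: "(complex \<Rightarrow> 'a::ab_group_add \<Rightarrow> 'a) \<Rightarrow> (complex \<Rightarrow> 'b::ab_group_add \<Rightarrow> 'b)
    \<Rightarrow> ('a \<Rightarrow> 'b) \<Rightarrow> bool" where
  "clinear_map sc1 sc2 f \<longleftrightarrow> (\<forall>x y. f (x + y) = f x + f y) \<and> (\<forall>c x. f (sc1 c x) = sc2 c (f x))"

definition compact_map :: "('a \<Rightarrow> 'a \<Rightarrow> complex) \<Rightarrow> ('b::ab_group_add \<Rightarrow> 'b \<Rightarrow> complex)
    \<Rightarrow> ('a \<Rightarrow> 'b) \<Rightarrow> bool" where
  "compact_map ip1 ip2 f \<longleftrightarrow>
     (\<forall>xs :: nat \<Rightarrow> 'a. (\<exists>M. \<forall>n. nrm ip1 (xs n) \<le> M) \<longrightarrow> (\<exists>r y. strict_mono r \<and> conv ip2 (\<lambda>n. f (xs (r n))) y))"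

definition sesquilinear :: "(complex \<Rightarrow> 'a::ab_group_add \<Rightarrow> 'a) \<Rightarrow> ('a \<Rightarrow> 'a \<Rightarrow> complex) \<Rightarrow> bool" where
  "sesquilinear sc a \<longleftrightarrow>
     (\<forall>x y z. a (x + y) z = a x z + a y z) \<and> (\<forall>c x y. a (sc c x) y = c * a x y) \<and>
     (\<forall>x y z. a x (y + z) = a x y + a x z) \<and> (\<forall>c x y. a x (sc c y) = cnj c * a x y)"

definition positive_form :: "('a \<Rightarrow> 'a \<Rightarrow> complex) \<Rightarrow> bool" where
  "positive_form a \<longleftrightarrow> (\<forall>u. Im (a u u) = 0 \<and> Re (a u u) \<ge> 0)"

definition symmetric_form :: "('a \<Rightarrow> 'a \<Rightarrow> complex) \<Rightarrow> bool" where
  "symmetric_form a \<longleftrightarrow> (\<forall>u v. a v u = cnj (a u v))"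

definition continuous_form :: "('a \<Rightarrow> 'a \<Rightarrow> complex) \<Rightarrow> ('a \<Rightarrow> 'a \<Rightarrow> complex) \<Rightarrow> bool" where
  "continuous_form ipV a \<longleftrightarrow> (\<exists>M. \<forall>u v. cmod (a u v) \<le> M * nrm ipV u * nrm ipV v)"

definition elliptic_form :: "('v \<Rightarrow> 'v \<Rightarrow> complex) \<Rightarrow> ('h \<Rightarrow> 'h \<Rightarrow> complex) \<Rightarrow> ('v \<Rightarrow> 'h)
    \<Rightarrow> ('v \<Rightarrow> 'v \<Rightarrow> complex) \<Rightarrow> bool" where
  "elliptic_form ipV ipH i a \<longleftrightarrow>
     (\<exists>\<omega> \<delta>. \<omega> > 0 \<and> \<delta> > 0 \<and> (\<forall>u. Re (a u u) + \<omega> * (nrm ipH (i u))\<^sup>2 \<ge> \<delta> * (nrm ipV u)\<^sup>2))"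

definition ncl :: "('a::ab_group_add \<Rightarrow> 'a \<Rightarrow> complex) \<Rightarrow> 'a set \<Rightarrow> 'a set" where
  "ncl ip S = {y. \<exists>xs. (\<forall>n. xs n \<in> S) \<and> conv ip xs y}"

text \<open>Graph (in H x H) of the operator in the closure of i(W) associated with the form c on W.\<close>
definition assoc_op :: "('h::ab_group_add \<Rightarrow> 'h \<Rightarrow> complex) \<Rightarrow> ('v \<Rightarrow> 'h) \<Rightarrow> 'v set
    \<Rightarrow> ('v \<Rightarrow> 'v \<Rightarrow> complex) \<Rightarrow> ('h \<times> 'h) set" where
  "assoc_op ipH i W c = {(i u, f) | u f. u \<in> W \<and> f \<in> ncl ipH (i ` W) \<and> (\<forall>v\<in>W. c u v = ipH f (i v))}"

definition Ngraph :: "('h \<Rightarrow> 'h \<Rightarrow> complex) \<Rightarrow> ('k \<Rightarrow> 'k \<Rightarrow> complex) \<Rightarrow> ('v \<Rightarrow> 'h) \<Rightarrow> ('v \<Rightarrow> 'k)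
    \<Rightarrow> ('v \<Rightarrow> 'v \<Rightarrow> complex) \<Rightarrow> real \<Rightarrow> ('k \<times> 'k) set" where
  "Ngraph ipH ipK i j a t =
     {(j u, \<psi>) | u \<psi>. \<forall>v. a u v - complex_of_real t * ipH (i u) (i v) = ipK \<psi> (j v)}"

text \<open>Single-valued part: graph intersected with closure(D) x closure(D).\<close>
definition Ncirc :: "('k::ab_group_add \<Rightarrow> 'k \<Rightarrow> complex) \<Rightarrow> ('k \<times> 'k) set \<Rightarrow> ('k \<times> 'k) set" where
  "Ncirc ipK N = N \<inter> (ncl ipK (Domain N) \<times> ncl ipK (Domain N))"

definition isotropic_set :: "('k::ab_group_add \<Rightarrow> 'k \<Rightarrow> complex) \<Rightarrow> ('k \<times> 'k) set \<Rightarrow> 'k set" where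
  "isotropic_set ipK N = {\<phi> \<in> Domain N. \<exists>\<psi>. (\<phi>, \<psi>) \<in> Ncirc ipK N \<and> ipK \<psi> \<phi> = 0}"

definition lin_indep :: "(complex \<Rightarrow> 'a::ab_group_add \<Rightarrow> 'a) \<Rightarrow> 'a set \<Rightarrow> bool" where
  "lin_indep sc F \<longleftrightarrow> (\<forall>c. (\<Sum>x\<in>F. sc (c x) x) = 0 \<longrightarrow> (\<forall>x\<in>F. c x = 0))"

definition cspan :: "(complex \<Rightarrow> 'a::ab_group_add \<Rightarrow> 'a) \<Rightarrow> 'a set \<Rightarrow> 'a set" where
  "cspan sc X = {(\<Sum>x\<in>F. sc (c x) x) | F c. finite F \<and> F \<subseteq> X}"

definition cdim :: "(complex \<Rightarrow> 'a::ab_group_add \<Rightarrow> 'a) \<Rightarrow> 'a set \<Rightarrow> enat" where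
  "cdim sc S = Sup {enat (card F) | F. finite F \<and> F \<subseteq> S \<and> lin_indep sc F}"

definition eigsp :: "(complex \<Rightarrow> 'h \<Rightarrow> 'h) \<Rightarrow> ('h \<times> 'h) set \<Rightarrow> real \<Rightarrow> 'h set" where
  "eigsp sc B \<mu> = {x. (x, sc (complex_of_real \<mu>) x) \<in> B}"

text \<open>lam 1 <= lam 2 <= ... (indices 1..N, N possibly infinite) are the eigenvalues of B
  repeated according to multiplicity.\<close>
definition eig_enum :: "(complex \<Rightarrow> 'h::ab_group_add \<Rightarrow> 'h) \<Rightarrow> ('h \<times> 'h) set \<Rightarrow> enat \<Rightarrow> (nat \<Rightarrow> real) \<Rightarrow> bool" where
  "eig_enum sc B N lam \<longleftrightarrow>
     (\<forall>m n. 1 \<le> m \<longrightarrow> m \<le> n \<longrightarrow> enat n \<le> N \<longrightarrow> lam m \<le> lam n) \<and>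
     (\<forall>\<mu>. finite {n. 1 \<le> n \<and> enat n \<le> N \<and> lam n = \<mu>} \<and>
          enat (card {n. 1 \<le> n \<and> enat n \<le> N \<and> lam n = \<mu>}) = cdim sc (eigsp sc B \<mu>))"

end

theory Submission
  imports Defs
begin

text \<open>Suppose \<lambda>D(n) \<le> \<lambda>N(n+1) = \<kappa> and put
  \<mu> = \<lambda>D(n), which is positive by (I). With no spectral theorem at hand, the min-max principle is
  derived directly: minimizers of the Rayleigh quotient a(u,u)/|u|^2 exist on closed subspaces
  (coercivity plus compactness of i), and taking them successively gives at most n orthonormal
  Neumann eigenvectors G with a(u,u) \<ge> \<kappa>|u|^2 on the orthogonal complement of G. The Dirichlet
  eigenvectors for \<lambda>D(1), \<dots>, \<lambda>D(n) span an n-dimensional subspace of ker j on which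
  a(u,u) \<le> \<mu>|u|^2. If \<phi> = j u is isotropic for N(\<mu>), the span of u and that subspace contains a
  nonzero x orthogonal to G with a(x,x) \<le> \<mu>|x|^2 \<le> \<kappa>|x|^2, so x minimizes the Rayleigh quotient
  on the complement of G and is a Neumann eigenvector for \<mu>; by (I) it is not in ker j, and a
  multiple of it is mapped to \<phi>. Hence every isotropic vector of N(\<mu>) lies in the j-image of
  the finite-dimensional Neumann eigenspace for \<mu>, contradicting (II).\<close>

lemma additive_zero:
  fixes f :: "'a::ab_group_add \<Rightarrow> 'b::ab_group_add"
  assumes "\<And>x y. f (x + y) = f x + f y" shows "f 0 = 0"
  using assms[of 0 0] by simp

lemma additive_minus:
  fixes f :: "'a::ab_group_add \<Rightarrow> 'b::ab_group_add"
  assumes "\<And>x y. f (x + y) = f x + f y" shows "f (- x) = - f x"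
  using assms[of x "-x"] additive_zero[OF assms] by (metis minus_unique add.right_inverse)

lemma additive_diff:
  fixes f :: "'a::ab_group_add \<Rightarrow> 'b::ab_group_add"
  assumes "\<And>x y. f (x + y) = f x + f y" shows "f (x - y) = f x - f y"
  using assms[of x "-y"] additive_minus[OF assms, of y] by simp

lemma additive_sum:
  fixes f :: "'a::ab_group_add \<Rightarrow> 'b::ab_group_add"
  assumes "\<And>x y. f (x + y) = f x + f y" shows "f (\<Sum>k\<in>F. g k) = (\<Sum>k\<in>F. f (g k))"
  by (induction F rule: infinite_finite_induct) (simp_all add: additive_zero[OF assms] assms)

lemma homogeneous_system_nontrivial_solution:
  fixes M :: "'i \<Rightarrow> 'r \<Rightarrow> complex"
  assumes "finite R" "finite I" "card R < card I"
  shows "\<exists>c. (\<exists>k\<in>I. c k \<noteq> 0) \<and> (\<forall>r\<in>R. (\<Sum>k\<in>I. M k r * c k) = 0)"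
  using assms
proof (induction R arbitrary: I M rule: finite_induct)
  case empty
  then obtain k0 where "k0 \<in> I" by fastforce
  then show ?case by (intro exI[of _ "\<lambda>k. if k = k0 then 1 else 0"]) auto
next
  case (insert r R)
  have card_R: "card R < card I" using insert by simp
  show ?case
  proof (cases "\<forall>k\<in>I. M k r = 0")
    case True
    then show ?thesis using insert.IH[OF insert.prems(1) card_R] by fastforce
  next
    case False
    then obtain k0 where k0: "k0 \<in> I" "M k0 r \<noteq> 0" by blast
    define I' where "I' = I - {k0}"
    have I'_finite: "finite I'" unfolding I'_def using insert.prems(1) by simp
    have card_I': "card R < card I'" unfolding I'_def using insert.prems k0(1) insert.hyps by simp
    \<comment> \<open>Gaussian elimination: use equation r to eliminate the unknown k0.\<close>
    obtain c' where c': "\<exists>k\<in>I'. c' k \<noteq> 0"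
      "\<forall>s\<in>R. (\<Sum>k\<in>I'. (M k s - (M k r / M k0 r) * M k0 s) * c' k) = 0"
      using insert.IH[OF I'_finite card_I', of "\<lambda>k s. M k s - (M k r / M k0 r) * M k0 s"] by blast
    define c0 where "c0 = - (\<Sum>k\<in>I'. M k r * c' k) / M k0 r"
    define c where "c k = (if k = k0 then c0 else c' k)" for k
    have split: "(\<Sum>k\<in>I. M k s * c k) = M k0 s * c0 + (\<Sum>k\<in>I'. M k s * c' k)" for s
    proof -
      have "I = insert k0 I'" "k0 \<notin> I'" unfolding I'_def using k0(1) by blast+
      then have "(\<Sum>k\<in>I. M k s * c k) = M k0 s * c k0 + (\<Sum>k\<in>I'. M k s * c k)"
        using I'_finite by simp
      moreover have "(\<Sum>k\<in>I'. M k s * c k) = (\<Sum>k\<in>I'. M k s * c' k)"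
        unfolding c_def using \<open>k0 \<notin> I'\<close> by (intro sum.cong) auto
      ultimately show ?thesis unfolding c_def by simp
    qed
    have "(\<Sum>k\<in>I. M k s * c k) = 0" if "s \<in> R" for s
    proof -
      have "0 = (\<Sum>k\<in>I'. (M k s - (M k r / M k0 r) * M k0 s) * c' k)" using c'(2) that by simp
      also have "\<dots> = (\<Sum>k\<in>I'. M k s * c' k) - (M k0 s / M k0 r) * (\<Sum>k\<in>I'. M k r * c' k)"
        by (simp add: sum_subtractf sum_distrib_left algebra_simps)
      also have "\<dots> = (\<Sum>k\<in>I'. M k s * c' k) + M k0 s * c0"
        unfolding c0_def using k0(2) by (simp add: field_simps)
      finally show ?thesis using split[of s] by (simp add: algebra_simps)
    qed
    moreover have "(\<Sum>k\<in>I. M k r * c k) = 0"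
      using split[of r] k0(2) unfolding c0_def by simp
    moreover have "\<exists>k\<in>I. c k \<noteq> 0"
      using c'(1) unfolding c_def I'_def by (metis DiffE singletonI)
    ultimately show ?thesis by (intro exI[of _ c]) auto
  qed
qed

lemma lin_indep_D: "lin_indep sc F \<Longrightarrow> (\<Sum>x\<in>F. sc (c x) x) = 0 \<Longrightarrow> x \<in> F \<Longrightarrow> c x = 0"
  unfolding lin_indep_def by blast

lemma cdim_ge: "finite F \<Longrightarrow> F \<subseteq> S \<Longrightarrow> lin_indep sc F \<Longrightarrow> enat (card F) \<le> cdim sc S"
  unfolding cdim_def by (intro Sup_upper) blast

lemma cdim_le:
  "(\<And>F. finite F \<Longrightarrow> F \<subseteq> S \<Longrightarrow> lin_indep sc F \<Longrightarrow> card F \<le> c) \<Longrightarrow> cdim sc S \<le> enat c"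
  unfolding cdim_def by (intro Sup_least) auto

lemma cdim_attained:
  assumes "cdim sc S = enat c"
  shows "\<exists>F. finite F \<and> F \<subseteq> S \<and> lin_indep sc F \<and> card F = c"
proof -
  define X where "X = {enat (card F) | F. finite F \<and> F \<subseteq> S \<and> lin_indep sc F}"
  have "enat (card {}) \<in> X" unfolding X_def lin_indep_def by (intro CollectI exI[of _ "{}"]) simp
  then have "X \<noteq> {}" by blast
  moreover have "Sup X = enat c" using assms unfolding cdim_def X_def .
  ultimately have "finite X" "Max X = enat c" unfolding Sup_enat_def by (auto split: if_splits)
  then have "enat c \<in> X" using Max_in \<open>X \<noteq> {}\<close> by metis
  then show ?thesis unfolding X_def by auto
qed

lemma tendsto_zero_if_abs_le:
  fixes f :: "nat \<Rightarrow> real"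
  assumes "g \<longlonglongrightarrow> 0" "\<And>k. \<bar>f k\<bar> \<le> g k" shows "f \<longlonglongrightarrow> 0"
proof (rule tendsto_sandwich[of "\<lambda>k. - g k" f sequentially g])
  show "\<forall>\<^sub>F k in sequentially. - g k \<le> f k" "\<forall>\<^sub>F k in sequentially. f k \<le> g k"
    using assms(2) abs_le_iff by (auto intro: always_eventually simp: minus_le_iff)
  show "(\<lambda>k. - g k) \<longlonglongrightarrow> 0" using tendsto_minus[OF assms(1)] by simp
qed (fact assms(1))

lemma lin_indep_linear_image:
  assumes f: "clinear_map sc1 sc2 f" "inj f" and indep: "lin_indep sc1 F"
  shows "lin_indep sc2 (f ` F)"
  unfolding lin_indep_def
proof (intro allI impI ballI)
  fix c y assume sum: "(\<Sum>x\<in>f ` F. sc2 (c x) x) = 0" and "y \<in> f ` F"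
  then obtain x where x: "x \<in> F" "y = f x" by blast
  have f_add: "\<And>x y. f (x + y) = f x + f y" and f_sc: "\<And>c x. f (sc1 c x) = sc2 c (f x)"
    using f(1) unfolding clinear_map_def by blast+
  have "f (\<Sum>x\<in>F. sc1 (c (f x)) x) = (\<Sum>x\<in>F. sc2 (c (f x)) (f x))"
    by (simp add: additive_sum[OF f_add] f_sc)
  also have "\<dots> = (\<Sum>x\<in>f ` F. sc2 (c x) x)"
    using sum.reindex[OF inj_on_subset[OF f(2) subset_UNIV], of "\<lambda>x. sc2 (c x) x"] by simp
  also have "\<dots> = 0" by (fact sum)
  finally have "(\<Sum>x\<in>F. sc1 (c (f x)) x) = 0"
    using f(2) additive_zero[OF f_add] by (metis injD)
  from lin_indep_D[OF indep this x(1)] show "c y = 0" using x(2) by simp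
qed

lemma lin_indep_of_linear_image:
  assumes f: "clinear_map sc1 sc2 f" "inj_on f F" and indep: "lin_indep sc2 (f ` F)"
  shows "lin_indep sc1 F"
  unfolding lin_indep_def
proof (intro allI impI ballI)
  fix c y assume sum: "(\<Sum>x\<in>F. sc1 (c x) x) = 0" and y: "y \<in> F"
  have f_add: "\<And>x y. f (x + y) = f x + f y" and f_sc: "\<And>c x. f (sc1 c x) = sc2 c (f x)"
    using f(1) unfolding clinear_map_def by blast+
  define c' where "c' = c \<circ> the_inv_into F f"
  have "(\<Sum>x\<in>f ` F. sc2 (c' x) x) = (\<Sum>x\<in>F. sc2 (c x) (f x))"
    unfolding c'_def using f(2) by (simp add: sum.reindex the_inv_into_f_f)
  also have "\<dots> = f (\<Sum>x\<in>F. sc1 (c x) x)" by (simp add: additive_sum[OF f_add] f_sc)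
  finally have "(\<Sum>x\<in>f ` F. sc2 (c' x) x) = 0" using sum additive_zero[OF f_add] by simp
  then have "c' (f y) = 0" using lin_indep_D[OF indep] y by blast
  then show "c y = 0" unfolding c'_def using f(2) y by (simp add: the_inv_into_f_f)
qed

definition eig_indices :: "enat \<Rightarrow> (nat \<Rightarrow> real) \<Rightarrow> real \<Rightarrow> nat set" where
  "eig_indices N lam \<nu> = {k. 1 \<le> k \<and> enat k \<le> N \<and> lam k = \<nu>}"

lemma eig_enum_mono: "eig_enum sc B N lam \<Longrightarrow> 1 \<le> m \<Longrightarrow> m \<le> k \<Longrightarrow> enat k \<le> N \<Longrightarrow> lam m \<le> lam k"
  unfolding eig_enum_def by blast

lemma eig_enum_finite_indices: "eig_enum sc B N lam \<Longrightarrow> finite (eig_indices N lam \<nu>)"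
  unfolding eig_enum_def eig_indices_def by blast

lemma eig_enum_multiplicity:
  "eig_enum sc B N lam \<Longrightarrow> cdim sc (eigsp sc B \<nu>) = enat (card (eig_indices N lam \<nu>))"
  unfolding eig_enum_def eig_indices_def by simp

section \<open>Complex Hilbert spaces\<close>

locale complex_hilbert =
  fixes sc :: "complex \<Rightarrow> 'a::ab_group_add \<Rightarrow> 'a" and ip :: "'a \<Rightarrow> 'a \<Rightarrow> complex"
  assumes chilbert: "chilbert sc ip"
begin

lemma sc_add_right: "sc c (x + y) = sc c x + sc c y" using chilbert unfolding chilbert_def by metis
lemma sc_add_left: "sc (c + d) x = sc c x + sc d x" using chilbert unfolding chilbert_def by metis
lemma sc_mult: "sc (c * d) x = sc c (sc d x)" using chilbert unfolding chilbert_def by metis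
lemma sc_one[simp]: "sc 1 x = x" using chilbert unfolding chilbert_def by metis
lemma ip_add_left: "ip (x + y) z = ip x z + ip y z" using chilbert unfolding chilbert_def by metis
lemma ip_sc_left: "ip (sc c x) y = c * ip x y" using chilbert unfolding chilbert_def by metis
lemma ip_sym: "ip y x = cnj (ip x y)" using chilbert unfolding chilbert_def by metis
lemma ip_self_nonneg: "Re (ip x x) \<ge> 0" using chilbert unfolding chilbert_def by metis
lemma ip_self_eq_0: "ip x x = 0 \<Longrightarrow> x = 0" using chilbert unfolding chilbert_def by metis
lemma complete: "\<forall>e>0. \<exists>N. \<forall>m\<ge>N. \<forall>n\<ge>N. nrm ip (xs m - xs n) < e \<Longrightarrow> \<exists>y. conv ip xs y"
  using chilbert unfolding chilbert_def by metis

lemma sc_zero_right[simp]: "sc c 0 = 0" using additive_zero[of "sc c"] sc_add_right by blast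
lemma sc_zero_left[simp]: "sc 0 x = 0" using sc_add_left[of 0 0 x] by simp
lemma sc_minus_one: "sc (-1) x = - x"
  using sc_add_left[of 1 "-1" x] by (simp add: add_eq_0_iff)

lemma ip_zero_left[simp]: "ip 0 y = 0" using additive_zero[of "\<lambda>x. ip x y"] ip_add_left by blast
lemma ip_diff_left: "ip (x - z) y = ip x y - ip z y"
  using additive_diff[of "\<lambda>x. ip x y"] ip_add_left by blast
lemma ip_sum_left: "ip (\<Sum>k\<in>F. g k) y = (\<Sum>k\<in>F. ip (g k) y)"
  using additive_sum[of "\<lambda>x. ip x y"] ip_add_left by blast
lemma ip_add_right: "ip x (y + z) = ip x y + ip x z"
  by (metis ip_add_left ip_sym complex_cnj_add)
lemma ip_sc_right: "ip x (sc c y) = cnj c * ip x y"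
  by (metis ip_sc_left ip_sym complex_cnj_mult)
lemma ip_zero_right[simp]: "ip y 0 = 0" using additive_zero[of "\<lambda>x. ip y x"] ip_add_right by blast
lemma ip_minus_right: "ip y (- x) = - ip y x" using additive_minus[of "\<lambda>x. ip y x"] ip_add_right by blast
lemma ip_diff_right: "ip y (x - z) = ip y x - ip y z"
  using additive_diff[of "\<lambda>x. ip y x"] ip_add_right by blast
lemma ip_sum_right: "ip y (\<Sum>k\<in>F. g k) = (\<Sum>k\<in>F. ip y (g k))"
  using additive_sum[of "\<lambda>x. ip y x"] ip_add_right by blast

lemma ip_self_eq_nrm_sq: "ip x x = complex_of_real ((nrm ip x)\<^sup>2)"
proof -
  have "Im (ip x x) = 0" using ip_sym[of x x] by (metis Reals_cnj_iff complex_is_Real_iff)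
  then show ?thesis using ip_self_nonneg[of x] unfolding nrm_def by (simp add: complex_eq_iff)
qed

lemma nrm_zero[simp]: "nrm ip 0 = 0" by (simp add: nrm_def)

lemma nrm_nonneg: "nrm ip x \<ge> 0" using ip_self_nonneg[of x] unfolding nrm_def by simp

lemma nrm_sq: "(nrm ip x)\<^sup>2 = Re (ip x x)" unfolding nrm_def using ip_self_nonneg[of x] by simp

lemma nrm_eq_0_iff[simp]: "nrm ip x = 0 \<longleftrightarrow> x = 0"
  using ip_self_eq_0 ip_self_eq_nrm_sq[of x] by (auto simp: nrm_def)

lemma nrm_pos_iff: "nrm ip x > 0 \<longleftrightarrow> x \<noteq> 0"
  using nrm_nonneg[of x] nrm_eq_0_iff[of x] by linarith

lemma nrm_sc: "nrm ip (sc c x) = cmod c * nrm ip x"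
proof -
  have "ip (sc c x) (sc c x) = complex_of_real ((cmod c)\<^sup>2) * ip x x"
    using complex_norm_square[of c] by (simp add: ip_sc_left ip_sc_right)
  then have "(nrm ip (sc c x))\<^sup>2 = (cmod c * nrm ip x)\<^sup>2"
    using ip_self_eq_nrm_sq[of "sc c x"] ip_self_eq_nrm_sq[of x]
    by (metis of_real_eq_iff of_real_mult power_mult_distrib)
  then show ?thesis using nrm_nonneg by simp
qed

lemma nrm_minus_commute: "nrm ip (x - y) = nrm ip (y - x)"
  using nrm_sc[of "-1" "x - y"] sc_minus_one by simp

lemma cauchy_schwarz: "cmod (ip x y) \<le> nrm ip x * nrm ip y"
proof (cases "y = 0")
  case True then show ?thesis by simp
next
  case False
  let ?t = "ip x y / ip y y"
  have yy: "ip y y = complex_of_real ((nrm ip y)\<^sup>2)" by (rule ip_self_eq_nrm_sq)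
  have ny: "nrm ip y > 0" using False nrm_pos_iff by blast
  have "0 \<le> Re (ip (x - sc ?t y) (x - sc ?t y))" by (rule ip_self_nonneg)
  also have "ip (x - sc ?t y) (x - sc ?t y) = ip x x - cnj ?t * ip x y - ?t * ip y x + ?t * cnj ?t * ip y y"
    by (simp add: ip_diff_left ip_diff_right ip_sc_left ip_sc_right algebra_simps)
  also have "\<dots> = ip x x - ip x y * cnj (ip x y) / ip y y"
    using False ip_self_eq_0[of y] ip_sym[of x y] by (simp add: field_simps power2_eq_square)
  finally have "0 \<le> Re (ip x x) - (cmod (ip x y))\<^sup>2 / (nrm ip y)\<^sup>2"
    using yy by (simp add: complex_mult_cnj cmod_power2 del: of_real_power)
  then have "(cmod (ip x y))\<^sup>2 \<le> (nrm ip x)\<^sup>2 * (nrm ip y)\<^sup>2"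
    using ny False nrm_sq[of x] by (simp add: divide_le_eq)
  then have "(cmod (ip x y))\<^sup>2 \<le> (nrm ip x * nrm ip y)\<^sup>2" by (simp add: power_mult_distrib)
  then show ?thesis by (rule power2_le_imp_le) (simp add: nrm_nonneg)
qed

lemma nrm_add_sq: "(nrm ip (x + y))\<^sup>2 = (nrm ip x)\<^sup>2 + (nrm ip y)\<^sup>2 + 2 * Re (ip x y)"
proof -
  have "ip (x + y) (x + y) = ip x x + ip y y + (ip x y + cnj (ip x y))"
    using ip_sym[of x y] by (simp add: ip_add_left ip_add_right)
  then show ?thesis using nrm_sq[of "x+y"] nrm_sq[of x] nrm_sq[of y] by simp
qed

lemma nrm_triangle: "nrm ip (x + y) \<le> nrm ip x + nrm ip y"
proof -
  have "Re (ip x y) \<le> nrm ip x * nrm ip y"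
    using cauchy_schwarz[of x y] complex_Re_le_cmod order_trans by blast
  then have "(nrm ip (x + y))\<^sup>2 \<le> (nrm ip x + nrm ip y)\<^sup>2" by (simp add: nrm_add_sq power2_sum)
  then show ?thesis using nrm_nonneg by (meson add_nonneg_nonneg power2_le_imp_le)
qed

lemma nrm_triangle_diff: "nrm ip (x - y) \<le> nrm ip (x - z) + nrm ip (z - y)"
  using nrm_triangle[of "x - z" "z - y"] by simp

lemma nrm_reverse_triangle: "\<bar>nrm ip x - nrm ip y\<bar> \<le> nrm ip (x - y)"
  using nrm_triangle[of "x - y" y] nrm_triangle[of "y - x" x] nrm_minus_commute[of x y] by auto

lemma parallelogram:
  "(nrm ip (x + y))\<^sup>2 + (nrm ip (x - y))\<^sup>2 = 2 * (nrm ip x)\<^sup>2 + 2 * (nrm ip y)\<^sup>2"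
  using nrm_add_sq[of x y] nrm_add_sq[of x "-y"] nrm_sc[of "-1" y] sc_minus_one[of y]
    ip_minus_right[of x y] by simp

lemma zero_notin_lin_indep: "lin_indep sc F \<Longrightarrow> 0 \<notin> F"
proof
  assume indep: "lin_indep sc F" and "0 \<in> F"
  have "(\<Sum>x\<in>F. sc (if x = 0 then 1 else 0) x) = 0" by (intro sum.neutral) auto
  from lin_indep_D[OF indep this \<open>0 \<in> F\<close>] show False by simp
qed

lemma conv_imp_nrm_tendsto: "conv ip xs y \<Longrightarrow> (\<lambda>k. nrm ip (xs k)) \<longlonglongrightarrow> nrm ip y"
  unfolding conv_def using nrm_reverse_triangle[of "xs _" y]
  by (subst LIM_zero_iff[symmetric]) (rule tendsto_zero_if_abs_le)

lemma conv_imp_ip_tendsto: "conv ip xs y \<Longrightarrow> (\<lambda>k. ip (xs k) g) \<longlonglongrightarrow> ip y g"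
proof -
  assume "conv ip xs y"
  then have "(\<lambda>k. nrm ip (xs k - y) * nrm ip g) \<longlonglongrightarrow> 0"
    unfolding conv_def using tendsto_mult_left_zero by blast
  moreover have "\<bar>norm (ip (xs k) g - ip y g)\<bar> \<le> nrm ip (xs k - y) * nrm ip g" for k
    using cauchy_schwarz[of "xs k - y" g] by (simp add: ip_diff_left)
  ultimately have "(\<lambda>k. norm (ip (xs k) g - ip y g)) \<longlonglongrightarrow> 0" by (rule tendsto_zero_if_abs_le)
  then show ?thesis by (simp add: LIM_zero_iff tendsto_norm_zero_iff)
qed

lemma conv_if_sq_dist_le:
  assumes "e \<longlonglongrightarrow> 0" and "\<And>p q. (nrm ip (xs p - xs q))\<^sup>2 \<le> C * (e p + e q)"
  shows "\<exists>y. conv ip xs y"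
proof (rule complete, intro allI impI)
  fix \<epsilon> :: real assume "\<epsilon> > 0"
  then have "\<epsilon>\<^sup>2 / (2 * (\<bar>C\<bar> + 1)) > 0" by simp
  then obtain N where N: "\<And>k. k \<ge> N \<Longrightarrow> \<bar>e k\<bar> < \<epsilon>\<^sup>2 / (2 * (\<bar>C\<bar> + 1))"
    using LIMSEQ_D[OF assms(1)] by (metis real_norm_def diff_zero)
  show "\<exists>N. \<forall>p\<ge>N. \<forall>q\<ge>N. nrm ip (xs p - xs q) < \<epsilon>"
  proof (intro exI allI impI)
    fix p q assume "p \<ge> N" "q \<ge> N"
    then have "\<bar>e p\<bar> + \<bar>e q\<bar> \<le> \<epsilon>\<^sup>2 / (\<bar>C\<bar> + 1)" using N[of p] N[of q] by (simp add: field_simps)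
    then have "\<bar>C\<bar> * (\<bar>e p\<bar> + \<bar>e q\<bar>) \<le> \<bar>C\<bar> * (\<epsilon>\<^sup>2 / (\<bar>C\<bar> + 1))"
      by (rule mult_left_mono) simp
    also have "\<dots> < \<epsilon>\<^sup>2" using \<open>\<epsilon> > 0\<close> by (simp add: field_simps)
    finally have small: "\<bar>C\<bar> * (\<bar>e p\<bar> + \<bar>e q\<bar>) < \<epsilon>\<^sup>2" .
    have "C * (e p + e q) \<le> \<bar>C\<bar> * \<bar>e p + e q\<bar>" by (metis abs_ge_self abs_mult)
    also have "\<dots> \<le> \<bar>C\<bar> * (\<bar>e p\<bar> + \<bar>e q\<bar>)" by (rule mult_left_mono[OF abs_triangle_ineq abs_ge_zero])
    finally have "C * (e p + e q) \<le> \<bar>C\<bar> * (\<bar>e p\<bar> + \<bar>e q\<bar>)" .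
    then have "(nrm ip (xs p - xs q))\<^sup>2 < \<epsilon>\<^sup>2" using assms(2)[of p q] small by linarith
    then show "nrm ip (xs p - xs q) < \<epsilon>" using \<open>\<epsilon> > 0\<close> by (simp add: power_less_imp_less_base)
  qed
qed

lemma mem_ncl: "y \<in> S \<Longrightarrow> y \<in> ncl ip S"
  unfolding ncl_def conv_def by (intro CollectI exI[of _ "\<lambda>_. y"]) simp

definition closed_subspace :: "'a set \<Rightarrow> bool" where
  "closed_subspace W \<longleftrightarrow> (\<forall>x\<in>W. \<forall>y\<in>W. x + y \<in> W) \<and> (\<forall>c. \<forall>x\<in>W. sc c x \<in> W) \<and>
     (\<forall>xs z. (\<forall>k. xs k \<in> W) \<longrightarrow> conv ip xs z \<longrightarrow> z \<in> W)"

end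

section \<open>Minimizers of the Rayleigh quotient\<close>

locale form_setting =
  V: complex_hilbert scV ipV + H: complex_hilbert scH ipH + K: complex_hilbert scK ipK
  for scV :: "complex \<Rightarrow> 'v::ab_group_add \<Rightarrow> 'v" and ipV
  and scH :: "complex \<Rightarrow> 'h::ab_group_add \<Rightarrow> 'h" and ipH
  and scK :: "complex \<Rightarrow> 'k::ab_group_add \<Rightarrow> 'k" and ipK +
  fixes i :: "'v \<Rightarrow> 'h" and j :: "'v \<Rightarrow> 'k" and a :: "'v \<Rightarrow> 'v \<Rightarrow> complex"
  assumes i_linear: "clinear_map scV scH i" and inj_i: "inj i" and i_compact: "compact_map ipV ipH i"
    and j_linear: "clinear_map scV scK j"
    and a_sesquilinear: "sesquilinear scV a" and a_positive: "positive_form a"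
    and a_symmetric: "symmetric_form a" and a_continuous: "continuous_form ipV a"
    and a_elliptic: "elliptic_form ipV ipH i a"
begin

abbreviation "nV \<equiv> nrm ipV"
abbreviation "nH \<equiv> nrm ipH"
abbreviation "iph u v \<equiv> ipH (i u) (i v)"

lemma i_add: "i (x + y) = i x + i y" using i_linear unfolding clinear_map_def by blast
lemma i_sc: "i (scV c x) = scH c (i x)" using i_linear unfolding clinear_map_def by blast
lemma i_zero[simp]: "i 0 = 0" using additive_zero[of i] i_add by blast
lemma i_diff: "i (x - y) = i x - i y" using additive_diff[of i] i_add by blast
lemma i_sum: "i (\<Sum>k\<in>F. g k) = (\<Sum>k\<in>F. i (g k))" using additive_sum[of i] i_add by blast
lemma i_eq_0_iff[simp]: "i x = 0 \<longleftrightarrow> x = 0" using inj_i i_zero by (metis injD)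

lemma iph_self_eq_0_iff: "iph u u = 0 \<longleftrightarrow> u = 0" using H.ip_self_eq_0[of "i u"] by auto

lemma j_add: "j (x + y) = j x + j y" using j_linear unfolding clinear_map_def by blast
lemma j_sc: "j (scV c x) = scK c (j x)" using j_linear unfolding clinear_map_def by blast
lemma j_zero[simp]: "j 0 = 0" using additive_zero[of j] j_add by blast
lemma j_sum: "j (\<Sum>k\<in>F. g k) = (\<Sum>k\<in>F. j (g k))" using additive_sum[of j] j_add by blast

lemma a_add_left: "a (x + y) z = a x z + a y z" using a_sesquilinear unfolding sesquilinear_def by blast
lemma a_sc_left: "a (scV c x) y = c * a x y" using a_sesquilinear unfolding sesquilinear_def by blast
lemma a_add_right: "a x (y + z) = a x y + a x z" using a_sesquilinear unfolding sesquilinear_def by blast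
lemma a_sc_right: "a x (scV c y) = cnj c * a x y" using a_sesquilinear unfolding sesquilinear_def by blast
lemma a_sym: "a v u = cnj (a u v)" using a_symmetric unfolding symmetric_form_def by blast
lemma a_zero_left[simp]: "a 0 y = 0" using additive_zero[of "\<lambda>x. a x y"] a_add_left by blast
lemma a_zero_right[simp]: "a y 0 = 0" using additive_zero[of "\<lambda>x. a y x"] a_add_right by blast
lemma a_diff_left: "a (x - z) y = a x y - a z y" using additive_diff[of "\<lambda>x. a x y"] a_add_left by blast
lemma a_diff_right: "a y (x - z) = a y x - a y z" using additive_diff[of "\<lambda>x. a y x"] a_add_right by blast
lemma a_sum_left: "a (\<Sum>k\<in>F. g k) y = (\<Sum>k\<in>F. a (g k) y)" using additive_sum[of "\<lambda>x. a x y"] a_add_left by blast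
lemma a_sum_right: "a y (\<Sum>k\<in>F. g k) = (\<Sum>k\<in>F. a y (g k))" using additive_sum[of "\<lambda>x. a y x"] a_add_right by blast
lemma a_self_nonneg: "Re (a u u) \<ge> 0" using a_positive unfolding positive_form_def by blast
lemma a_self_real: "a u u = complex_of_real (Re (a u u))"
  using a_positive unfolding positive_form_def by (simp add: complex_eq_iff)

lemma a_sc_self: "Re (a (scV c u) (scV c u)) = (cmod c)\<^sup>2 * Re (a u u)"
proof -
  have "a (scV c u) (scV c u) = complex_of_real ((cmod c)\<^sup>2) * a u u"
    using complex_norm_square[of c] by (simp add: a_sc_left a_sc_right)
  then show ?thesis using a_self_real[of u] by (metis Re_complex_of_real of_real_mult)
qed

lemma a_parallelogram:
  "Re (a (x + y) (x + y)) + Re (a (x - y) (x - y)) = 2 * Re (a x x) + 2 * Re (a y y)"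
  by (simp add: a_add_left a_add_right a_diff_left a_diff_right)

lemma a_bounded: obtains M where "M \<ge> 0" "\<And>u v. cmod (a u v) \<le> M * nV u * nV v"
proof -
  obtain M where M: "\<And>u v. cmod (a u v) \<le> M * nV u * nV v"
    using a_continuous unfolding continuous_form_def by blast
  have "cmod (a u v) \<le> \<bar>M\<bar> * nV u * nV v" for u v
  proof -
    have "M * (nV u * nV v) \<le> \<bar>M\<bar> * (nV u * nV v)"
      by (rule mult_right_mono) (simp_all add: V.nrm_nonneg)
    then show ?thesis using M[of u v] by (metis mult.assoc order_trans)
  qed
  then show thesis by (rule that[rotated]) simp
qed

lemma a_coercive:
  obtains \<omega> \<delta> where "\<omega> > 0" "\<delta> > 0" "\<And>u. \<delta> * (nV u)\<^sup>2 \<le> Re (a u u) + \<omega> * (nH (i u))\<^sup>2"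
  using a_elliptic unfolding elliptic_form_def by blast

lemma i_bounded: obtains C where "C > 0" "\<And>u. nH (i u) \<le> C * nV u"
proof -
  have "\<exists>C>0. \<forall>u. nH (i u) \<le> C * nV u"
  proof (rule ccontr)
    assume unbounded: "\<not> ?thesis"
    have "\<exists>u. nH (i u) > (real k + 1) * nV u" for k :: nat
    proof -
      have "real k + 1 > 0" by simp
      then show ?thesis using unbounded by (meson not_le)
    qed
    then obtain us where us: "\<And>k. nH (i (us k)) > (real k + 1) * nV (us k)" by metis
    have us_nonzero: "us k \<noteq> 0" for k using us[of k] by (auto simp: V.nrm_pos_iff)
    then have us_pos: "nV (us k) > 0" for k using V.nrm_pos_iff by blast
    define xs where "xs k = scV (complex_of_real (1 / nV (us k))) (us k)" for k
    have "nV (xs k) = 1" for k using us_pos[of k] us_nonzero[of k] unfolding xs_def V.nrm_sc by (simp add: norm_divide)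
    then obtain r y where r: "strict_mono r" and y: "conv ipH (\<lambda>k. i (xs (r k))) y"
      using i_compact unfolding compact_map_def by (metis order_refl)
    have "nH (i (xs k)) = nH (i (us k)) / nV (us k)" for k
      using us_pos[of k] unfolding xs_def i_sc H.nrm_sc by (simp add: norm_divide)
    then have grow: "nH (i (xs k)) > real k + 1" for k
      using us[of k] us_pos[of k] by (simp add: less_divide_eq)
    have large: "nH (i (xs (r k))) > real k + 1" for k
    proof -
      have "real k \<le> real (r k)" using seq_suble[OF r, of k] by simp
      then show ?thesis using grow[of "r k"] by linarith
    qed
    obtain K where K: "\<And>k. \<bar>nH (i (xs (r k)))\<bar> \<le> K"
      using convergent_imp_Bseq[OF convergentI[OF H.conv_imp_nrm_tendsto[OF y]]]
      by (auto simp: Bseq_def)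
    obtain k where "K < real k" using reals_Archimedean2 by blast
    then show False using large[of k] K[of k] abs_ge_self[of "nH (i (xs (r k)))"] by linarith
  qed
  then show thesis using that by blast
qed

lemma conv_i: "conv ipV xs z \<Longrightarrow> conv ipH (\<lambda>k. i (xs k)) (i z)"
proof -
  assume "conv ipV xs z"
  obtain C where C: "C > 0" "\<And>u. nH (i u) \<le> C * nV u" using i_bounded by blast
  have "(\<lambda>k. C * nV (xs k - z)) \<longlonglongrightarrow> 0"
    using \<open>conv ipV xs z\<close> unfolding conv_def by (simp add: tendsto_mult_right_zero)
  moreover have "\<bar>nH (i (xs k) - i z)\<bar> \<le> C * nV (xs k - z)" for k
    using C(2)[of "xs k - z"] H.nrm_nonneg by (simp add: i_diff)
  ultimately show ?thesis unfolding conv_def by (rule tendsto_zero_if_abs_le)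
qed

lemma conv_a_self: "conv ipV xs z \<Longrightarrow> (\<lambda>k. Re (a (xs k) (xs k))) \<longlonglongrightarrow> Re (a z z)"
proof -
  assume conv: "conv ipV xs z"
  obtain M where M: "M \<ge> 0" "\<And>u v. cmod (a u v) \<le> M * nV u * nV v" using a_bounded by blast
  let ?d = "\<lambda>k. nV (xs k - z)"
  have "(\<lambda>k. M * ?d k * (?d k + 2 * nV z)) \<longlonglongrightarrow> M * 0 * (0 + 2 * nV z)"
    using conv unfolding conv_def by (intro tendsto_intros)
  moreover have "\<bar>Re (a (xs k) (xs k)) - Re (a z z)\<bar> \<le> M * ?d k * (?d k + 2 * nV z)" for k
  proof -
    have split: "a (xs k) (xs k) - a z z = a (xs k - z) (xs k - z) + a (xs k - z) z + a z (xs k - z)"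
      by (simp add: a_diff_left a_diff_right)
    have "cmod (a (xs k) (xs k) - a z z) \<le> M * ?d k * ?d k + M * ?d k * nV z + M * nV z * ?d k"
      using norm_triangle_ineq[of "a (xs k - z) (xs k - z) + a (xs k - z) z" "a z (xs k - z)"]
        norm_triangle_ineq[of "a (xs k - z) (xs k - z)" "a (xs k - z) z"]
        M(2)[of "xs k - z" "xs k - z"] M(2)[of "xs k - z" z] M(2)[of z "xs k - z"]
      unfolding split by linarith
    moreover have "\<bar>Re (a (xs k) (xs k)) - Re (a z z)\<bar> \<le> cmod (a (xs k) (xs k) - a z z)"
      using abs_Re_le_cmod[of "a (xs k) (xs k) - a z z"] by simp
    ultimately show ?thesis by (simp add: algebra_simps)
  qed
  ultimately show ?thesis by (subst LIM_zero_iff[symmetric]) (rule tendsto_zero_if_abs_le, auto)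
qed

lemma rayleigh_infimum:
  assumes W_sc: "\<And>c x. x \<in> W \<Longrightarrow> scV c x \<in> W" and "u0 \<in> W" "u0 \<noteq> 0"
  obtains m where "m \<ge> 0" "\<And>w. w \<in> W \<Longrightarrow> m * (nH (i w))\<^sup>2 \<le> Re (a w w)"
    "\<And>k::nat. \<exists>u\<in>W. nH (i u) = 1 \<and> Re (a u u) < m + inverse (real (Suc k))"
proof -
  define Q where "Q = (\<lambda>u. Re (a u u)) ` {u \<in> W. nH (i u) = 1}"
  have normalize: "w' \<in> W \<and> nH (i w') = 1 \<and> Re (a w' w') = Re (a w w) / (nH (i w))\<^sup>2"
    if "w \<in> W" "w \<noteq> 0" "w' = scV (complex_of_real (1 / nH (i w))) w" for w w'
  proof -
    have "nH (i w) > 0" using that(2) H.nrm_pos_iff by simp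
    then show ?thesis using that W_sc
      by (simp add: i_sc H.nrm_sc norm_divide a_sc_self power_divide)
  qed
  have "Q \<noteq> {}" using normalize[OF assms(2,3) refl] unfolding Q_def by blast
  moreover have "bdd_below Q" unfolding Q_def by (intro bdd_belowI[of _ 0]) (auto simp: a_self_nonneg)
  ultimately have Inf_le: "Inf Q \<le> Re (a u u)" if "u \<in> W" "nH (i u) = 1" for u
    using that cInf_lower[of _ Q] by (auto simp: Q_def)
  have approx: "\<exists>u\<in>W. nH (i u) = 1 \<and> Re (a u u) < Inf Q + e" if "e > 0" for e
    using that cInf_less_iff[OF \<open>Q \<noteq> {}\<close> \<open>bdd_below Q\<close>, of "Inf Q + e"] by (auto simp: Q_def)
  have "Inf Q \<ge> 0"
    using \<open>Q \<noteq> {}\<close> by (intro cInf_greatest) (auto simp: Q_def a_self_nonneg)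
  have "Inf Q * (nH (i w))\<^sup>2 \<le> Re (a w w)" if "w \<in> W" for w
  proof (cases "w = 0")
    case False
    then have "nH (i w) > 0" using H.nrm_pos_iff by simp
    moreover have "Inf Q \<le> Re (a w w) / (nH (i w))\<^sup>2"
      using Inf_le normalize[OF that False refl] by metis
    ultimately show ?thesis using False by (simp add: le_divide_eq)
  qed simp
  with \<open>Inf Q \<ge> 0\<close> approx show thesis by (intro that) auto
qed

lemma coercive_parallelogram_estimate:
  assumes coercive: "\<And>u. \<delta> * (nV u)\<^sup>2 \<le> Re (a u u) + \<omega> * (nH (i u))\<^sup>2"
    and lower: "m * (nH (i (x + y)))\<^sup>2 \<le> Re (a (x + y) (x + y))"
    and unit: "nH (i x) = 1" "nH (i y) = 1"
  shows "\<delta> * (nV (x - y))\<^sup>2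
    \<le> 2 * (Re (a x x) - m) + 2 * (Re (a y y) - m) + (m + \<omega>) * (nH (i x - i y))\<^sup>2"
proof -
  have "(nH (i (x + y)))\<^sup>2 = 4 - (nH (i x - i y))\<^sup>2"
    using H.parallelogram[of "i x" "i y"] unit by (simp add: i_add)
  then have "m * (nH (i (x + y)))\<^sup>2 = m * 4 - m * (nH (i x - i y))\<^sup>2"
    by (simp add: right_diff_distrib)
  then show ?thesis
    using coercive[of "x - y"] lower a_parallelogram[of x y] by (simp add: i_diff algebra_simps)
qed

lemma near_minimizers_close:
  assumes coercive: "\<And>u. \<delta> * (nV u)\<^sup>2 \<le> Re (a u u) + \<omega> * (nH (i u))\<^sup>2" and "\<delta> > 0"
    and "m + \<omega> \<ge> 0" and lower: "m * (nH (i (x + y)))\<^sup>2 \<le> Re (a (x + y) (x + y))"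
    and unit: "nH (i x) = 1" "nH (i y) = 1"
    and near: "Re (a x x) - m \<le> s" "nH (i x - h) \<le> s" "Re (a y y) - m \<le> t" "nH (i y - h) \<le> t"
  shows "(nV (x - y))\<^sup>2 \<le> (2 + 2 * (m + \<omega>)) / \<delta> * (s + t)"
proof -
  have dist: "nH (i x - i y) \<le> s + t"
    using H.nrm_triangle_diff[of "i x" "i y" h] H.nrm_minus_commute[of h "i y"] near(2,4) by linarith
  have "nH (i x - i y) \<le> 2"
    using H.nrm_triangle_diff[of "i x" "i y" 0] H.nrm_minus_commute[of 0 "i y"] unit by simp
  then have "(nH (i x - i y))\<^sup>2 \<le> 2 * nH (i x - i y)"
    unfolding power2_eq_square using H.nrm_nonneg by (intro mult_right_mono)
  then have "(nH (i x - i y))\<^sup>2 \<le> 2 * (s + t)" by (rule order_trans) (use dist in simp)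
  then have "(m + \<omega>) * (nH (i x - i y))\<^sup>2 \<le> (m + \<omega>) * (2 * (s + t))"
    using \<open>m + \<omega> \<ge> 0\<close> by (rule mult_left_mono)
  then have "\<delta> * (nV (x - y))\<^sup>2 \<le> 2 * s + 2 * t + (m + \<omega>) * (2 * (s + t))"
    using coercive_parallelogram_estimate[OF coercive lower unit] near(1,3) by argo
  also have "\<dots> = (2 + 2 * (m + \<omega>)) * (s + t)" by (simp add: algebra_simps)
  finally show ?thesis using \<open>\<delta> > 0\<close> by (simp add: field_simps)
qed

text \<open>The direct method: a minimizing sequence for the Rayleigh quotient on W is bounded in V by
  coercivity, so compactness of i makes its image converge in H, and the parallelogram estimate
  above turns that into convergence in V.\<close>

lemma rayleigh_minimizer_exists:
  assumes W: "V.closed_subspace W" and "u0 \<in> W" "u0 \<noteq> 0"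
  obtains z m where "z \<in> W" "nH (i z) = 1" "Re (a z z) = m"
    "\<And>w. w \<in> W \<Longrightarrow> m * (nH (i w))\<^sup>2 \<le> Re (a w w)"
proof -
  have W_add: "x + y \<in> W" if "x \<in> W" "y \<in> W" for x y
    using W that unfolding V.closed_subspace_def by blast
  have W_sc: "scV c x \<in> W" if "x \<in> W" for x c
    using W that unfolding V.closed_subspace_def by blast
  obtain m where m: "m \<ge> 0" "\<And>w. w \<in> W \<Longrightarrow> m * (nH (i w))\<^sup>2 \<le> Re (a w w)"
    and approx: "\<And>k::nat. \<exists>u\<in>W. nH (i u) = 1 \<and> Re (a u u) < m + inverse (real (Suc k))"
    using rayleigh_infimum[OF W_sc assms(2,3)] by blast
  obtain us where us: "\<And>k. us k \<in> W" "\<And>k. nH (i (us k)) = 1"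
    "\<And>k. Re (a (us k) (us k)) < m + inverse (real (Suc k))"
    using approx by metis
  obtain \<omega> \<delta> where \<omega>: "\<omega> > 0" and \<delta>: "\<delta> > 0"
    and coercive: "\<And>u. \<delta> * (nV u)\<^sup>2 \<le> Re (a u u) + \<omega> * (nH (i u))\<^sup>2"
    using a_coercive by metis
  have "\<delta> * (nV (us k))\<^sup>2 \<le> m + 1 + \<omega>" for k
    using coercive[of "us k"] us(2,3)[of k] inverse_le_1_iff[of "real (Suc k)"] by simp
  then have "nV (us k) \<le> sqrt ((m + 1 + \<omega>) / \<delta>)" for k
    using \<delta> V.nrm_nonneg by (simp add: real_le_rsqrt le_divide_eq mult.commute)
  then obtain r h where r: "strict_mono r" and h: "conv ipH (\<lambda>k. i (us (r k))) h"
    using i_compact unfolding compact_map_def by metis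
  define xs where "xs k = us (r k)" for k
  have xs: "xs k \<in> W" "nH (i (xs k)) = 1" "Re (a (xs k) (xs k)) < m + inverse (real (Suc k))" for k
    using us[of "r k"] seq_suble[OF r, of k] unfolding xs_def
    by (auto intro: order.strict_trans2 le_imp_inverse_le)
  define e where "e k = inverse (real (Suc k)) + nH (i (xs k) - h)" for k
  have "e \<longlonglongrightarrow> 0"
    using tendsto_add_zero[OF LIMSEQ_inverse_real_of_nat h[unfolded conv_def]] unfolding e_def xs_def .
  moreover have "(nV (xs p - xs q))\<^sup>2 \<le> (2 + 2 * (m + \<omega>)) / \<delta> * (e p + e q)" for p q
  proof (rule near_minimizers_close[OF coercive \<delta>])
    show "m * (nH (i (xs p + xs q)))\<^sup>2 \<le> Re (a (xs p + xs q) (xs p + xs q))"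
      using m(2) W_add xs(1) by blast
    have e_ge: "inverse (real (Suc k)) \<le> e k" "nH (i (xs k) - h) \<le> e k" for k
      unfolding e_def using H.nrm_nonneg by simp_all
    show "Re (a (xs p) (xs p)) - m \<le> e p" "Re (a (xs q) (xs q)) - m \<le> e q"
      using xs(3)[of p] xs(3)[of q] e_ge(1)[of p] e_ge(1)[of q] by linarith+
    show "nH (i (xs p) - h) \<le> e p" "nH (i (xs q) - h) \<le> e q" by (fact e_ge(2))+
  qed (use m(1) \<omega> xs(2) in auto)
  ultimately obtain z where z: "conv ipV xs z" by (metis V.conv_if_sq_dist_le)
  have "z \<in> W" using W xs(1) z unfolding V.closed_subspace_def by blast
  have "nH (i z) = 1"
    using LIMSEQ_unique[OF H.conv_imp_nrm_tendsto[OF conv_i[OF z]]] xs(2) by simp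
  moreover have "Re (a z z) \<le> m"
  proof (rule LIMSEQ_le[OF conv_a_self[OF z]])
    show "(\<lambda>k. m + inverse (real (Suc k))) \<longlonglongrightarrow> m"
      using tendsto_add[OF tendsto_const LIMSEQ_inverse_real_of_nat, of m] by simp
  qed (use xs(3) less_imp_le in blast)
  moreover have "m \<le> Re (a z z)" using m(2)[OF \<open>z \<in> W\<close>] \<open>nH (i z) = 1\<close> by simp
  ultimately show thesis using that[of z m] m(2) \<open>z \<in> W\<close> \<open>nH (i z) = 1\<close> by simp
qed

section \<open>Neumann eigenvectors and the min-max principle\<close>

definition neumann_eigvec :: "real \<Rightarrow> 'v \<Rightarrow> bool" where
  "neumann_eigvec \<nu> g \<longleftrightarrow> (\<forall>v. a g v = complex_of_real \<nu> * iph g v)"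

definition dirichlet_eigvec :: "real \<Rightarrow> 'v \<Rightarrow> bool" where
  "dirichlet_eigvec \<nu> d \<longleftrightarrow> j d = 0 \<and> (\<forall>v. j v = 0 \<longrightarrow> a d v = complex_of_real \<nu> * iph d v)"

definition orthonormal :: "'v set \<Rightarrow> bool" where
  "orthonormal G \<longleftrightarrow> (\<forall>g\<in>G. \<forall>g'\<in>G. iph g g' = (if g = g' then 1 else 0))"

definition orth_compl :: "'v set \<Rightarrow> 'v set" where
  "orth_compl G = {u. \<forall>g\<in>G. iph u g = 0}"

lemma eigsp_neumann: "eigsp scH (assoc_op ipH i UNIV a) \<nu> = i ` {g. neumann_eigvec \<nu> g}"
proof (intro set_eqI iffI)
  fix x assume "x \<in> eigsp scH (assoc_op ipH i UNIV a) \<nu>"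
  then obtain u where "x = i u" "\<forall>v. a u v = ipH (scH (complex_of_real \<nu>) x) (i v)"
    unfolding eigsp_def assoc_op_def by blast
  then show "x \<in> i ` {g. neumann_eigvec \<nu> g}" unfolding neumann_eigvec_def by (simp add: H.ip_sc_left)
next
  fix x assume "x \<in> i ` {g. neumann_eigvec \<nu> g}"
  then obtain g where g: "x = i g" "neumann_eigvec \<nu> g" by blast
  have "scH (complex_of_real \<nu>) (i g) \<in> ncl ipH (i ` UNIV)"
    using H.mem_ncl[OF rangeI[of i "scV (complex_of_real \<nu>) g"]] by (simp add: i_sc)
  then show "x \<in> eigsp scH (assoc_op ipH i UNIV a) \<nu>"
    using g unfolding eigsp_def assoc_op_def neumann_eigvec_def by (auto simp: H.ip_sc_left)
qed

lemma eigsp_dirichlet: "eigsp scH (assoc_op ipH i {u. j u = 0} a) \<nu> = i ` {d. dirichlet_eigvec \<nu> d}"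
proof (intro set_eqI iffI)
  fix x assume "x \<in> eigsp scH (assoc_op ipH i {u. j u = 0} a) \<nu>"
  then obtain u where "x = i u" "j u = 0" "\<forall>v. j v = 0 \<longrightarrow> a u v = ipH (scH (complex_of_real \<nu>) x) (i v)"
    unfolding eigsp_def assoc_op_def by blast
  then show "x \<in> i ` {d. dirichlet_eigvec \<nu> d}" unfolding dirichlet_eigvec_def by (simp add: H.ip_sc_left)
next
  fix x assume "x \<in> i ` {d. dirichlet_eigvec \<nu> d}"
  then obtain g where g: "x = i g" "dirichlet_eigvec \<nu> g" by blast
  then have "scV (complex_of_real \<nu>) g \<in> {u. j u = 0}" by (simp add: dirichlet_eigvec_def j_sc)
  then have "scH (complex_of_real \<nu>) (i g) \<in> ncl ipH (i ` {u. j u = 0})"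
    using H.mem_ncl[OF imageI[of _ _ i]] by (metis i_sc)
  then show "x \<in> eigsp scH (assoc_op ipH i {u. j u = 0} a) \<nu>"
    using g unfolding eigsp_def assoc_op_def dirichlet_eigvec_def by (auto simp: H.ip_sc_left)
qed

lemma neumann_eigvec_in_graph:
  "neumann_eigvec \<nu> x \<Longrightarrow> (i x, scH (complex_of_real \<nu>) (i x)) \<in> assoc_op ipH i UNIV a"
  using eigsp_neumann[of \<nu>] unfolding eigsp_def by blast

lemma orth_compl_closed_subspace: "V.closed_subspace (orth_compl G)"
  unfolding V.closed_subspace_def
proof (intro conjI allI ballI impI)
  show "x + y \<in> orth_compl G" if "x \<in> orth_compl G" "y \<in> orth_compl G" for x y
    using that unfolding orth_compl_def by (simp add: i_add H.ip_add_left)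
  show "scV c x \<in> orth_compl G" if "x \<in> orth_compl G" for x c
    using that unfolding orth_compl_def by (simp add: i_sc H.ip_sc_left)
  show "z \<in> orth_compl G" if "\<forall>k. xs k \<in> orth_compl G" "conv ipV xs z" for xs z
    unfolding orth_compl_def
  proof (intro CollectI ballI)
    fix g assume "g \<in> G"
    have "(\<lambda>k. iph (xs k) g) \<longlonglongrightarrow> iph z g" using H.conv_imp_ip_tendsto[OF conv_i[OF that(2)]] .
    moreover have "(\<lambda>k. iph (xs k) g) = (\<lambda>k. 0)" using that(1) \<open>g \<in> G\<close> unfolding orth_compl_def by simp
    ultimately show "iph z g = 0" using LIMSEQ_unique tendsto_const by metis
  qed
qed

lemma orthonormal_lin_indep: "finite G \<Longrightarrow> orthonormal G \<Longrightarrow> lin_indep scH (i ` G)"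
proof -
  assume G: "finite G" "orthonormal G"
  have "lin_indep scV G" unfolding lin_indep_def
  proof (intro allI impI ballI)
    fix c g0 assume sum: "(\<Sum>x\<in>G. scV (c x) x) = 0" and g0: "g0 \<in> G"
    have "0 = ipH (i (\<Sum>x\<in>G. scV (c x) x)) (i g0)" using sum by simp
    also have "\<dots> = (\<Sum>x\<in>G. c x * iph x g0)" by (simp add: i_sum i_sc H.ip_sum_left H.ip_sc_left)
    also have "\<dots> = (\<Sum>x\<in>G. if x = g0 then c g0 else 0)"
      using G(2) g0 unfolding orthonormal_def by (intro sum.cong) auto
    also have "\<dots> = c g0" using G(1) g0 by simp
    finally show "c g0 = 0" by simp
  qed
  then show ?thesis using lin_indep_linear_image[OF i_linear inj_i] by blast
qed

lemma rayleigh_defect_expand: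
  "Re (a (z + scV t v) (z + scV t v)) - m * (nH (i (z + scV t v)))\<^sup>2 =
   (Re (a z z) - m * (nH (i z))\<^sup>2) + 2 * Re (cnj t * (a z v - complex_of_real m * iph z v))
   + (cmod t)\<^sup>2 * (Re (a v v) - m * (nH (i v))\<^sup>2)"
proof -
  have tt: "t * cnj t = complex_of_real ((cmod t)\<^sup>2)" using complex_norm_square[of t] by simp
  have "a (z + scV t v) (z + scV t v) = a z z + (cnj t * a z v + cnj (cnj t * a z v)) + t * cnj t * a v v"
    using a_sym[of z v] by (simp add: a_add_left a_add_right a_sc_left a_sc_right algebra_simps)
  then have "Re (a (z + scV t v) (z + scV t v)) = Re (a z z) + 2 * Re (cnj t * a z v) + (cmod t)\<^sup>2 * Re (a v v)"
    unfolding tt by simp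
  moreover have "ipH (i (z + scV t v)) (i (z + scV t v))
      = iph z z + (cnj t * iph z v + cnj (cnj t * iph z v)) + t * cnj t * iph v v"
    using H.ip_sym[of "i z" "i v"]
    by (simp add: i_add i_sc H.ip_add_left H.ip_add_right H.ip_sc_left H.ip_sc_right algebra_simps)
  then have "(nH (i (z + scV t v)))\<^sup>2 = (nH (i z))\<^sup>2 + 2 * Re (cnj t * iph z v) + (cmod t)\<^sup>2 * (nH (i v))\<^sup>2"
    unfolding tt H.nrm_sq by simp
  ultimately show ?thesis by (simp add: algebra_simps)
qed

text \<open>A real quadratic polynomial in t that is nonnegative and vanishes at 0 has no linear term;
  testing with t = -s \<beta> for small s > 0 makes the linear term dominate.\<close>

lemma euler_lagrange:
  assumes nonneg: "\<And>t. Re (a (z + scV t v) (z + scV t v)) - m * (nH (i (z + scV t v)))\<^sup>2 \<ge> 0"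
    and attained: "Re (a z z) = m * (nH (i z))\<^sup>2"
  shows "a z v = complex_of_real m * iph z v"
proof (rule ccontr)
  define \<beta> where "\<beta> = a z v - complex_of_real m * iph z v"
  define \<gamma> where "\<gamma> = Re (a v v) - m * (nH (i v))\<^sup>2"
  define s where "s = 1 / (\<bar>\<gamma>\<bar> + 1)"
  have s_pos: "s > 0" unfolding s_def by (simp add: add_pos_nonneg)
  assume "a z v \<noteq> complex_of_real m * iph z v"
  then have \<beta>_pos: "s * (cmod \<beta>)\<^sup>2 > 0" unfolding \<beta>_def using s_pos by simp
  have "s * \<gamma> < 1"
    unfolding s_def by (simp add: divide_less_eq add_pos_nonneg) linarith
  define t where "t = - complex_of_real s * \<beta>"
  have "0 \<le> 2 * Re (cnj t * \<beta>) + (cmod t)\<^sup>2 * \<gamma>"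
    using nonneg[of t] attained unfolding rayleigh_defect_expand \<beta>_def[symmetric] \<gamma>_def[symmetric]
    by simp
  moreover have "cnj t * \<beta> = - complex_of_real (s * (cmod \<beta>)\<^sup>2)"
    unfolding t_def using complex_norm_square[of \<beta>] by (simp add: mult.commute)
  moreover have "(cmod t)\<^sup>2 = s\<^sup>2 * (cmod \<beta>)\<^sup>2"
    unfolding t_def using s_pos by (simp add: norm_mult power_mult_distrib)
  ultimately have "0 \<le> - 2 * (s * (cmod \<beta>)\<^sup>2) + s\<^sup>2 * (cmod \<beta>)\<^sup>2 * \<gamma>"
    by simp
  also have "\<dots> = (s * (cmod \<beta>)\<^sup>2) * (s * \<gamma> - 2)" by (simp add: algebra_simps power2_eq_square)
  finally show False using \<beta>_pos \<open>s * \<gamma> < 1\<close> by (simp add: zero_le_mult_iff)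
qed

lemma constrained_minimizer_eigvec:
  assumes G: "finite G" "orthonormal G" "\<forall>g\<in>G. \<exists>\<nu>. neumann_eigvec \<nu> g"
    and z: "z \<in> orth_compl G" "Re (a z z) = m * (nH (i z))\<^sup>2"
    and min: "\<And>w. w \<in> orth_compl G \<Longrightarrow> m * (nH (i w))\<^sup>2 \<le> Re (a w w)"
  shows "neumann_eigvec m z"
  unfolding neumann_eigvec_def
proof
  fix v
  have on_compl: "a z w = complex_of_real m * iph z w" if "w \<in> orth_compl G" for w
  proof (rule euler_lagrange[OF _ z(2)])
    fix t
    have "z + scV t w \<in> orth_compl G"
      using orth_compl_closed_subspace z(1) that unfolding V.closed_subspace_def by blast
    then show "Re (a (z + scV t w) (z + scV t w)) - m * (nH (i (z + scV t w)))\<^sup>2 \<ge> 0"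
      using min by simp
  qed
  have z_orth: "iph z g = 0" if "g \<in> G" for g
    using z(1) that unfolding orth_compl_def by blast
  have a_z_orth: "a z g = 0" if "g \<in> G" for g
  proof -
    from G(3) that obtain \<nu> where "neumann_eigvec \<nu> g" by blast
    then have "a g z = complex_of_real \<nu> * iph g z" unfolding neumann_eigvec_def by blast
    moreover have "iph g z = 0" using z_orth[OF that] H.ip_sym[of "i g" "i z"] by simp
    ultimately show ?thesis using a_sym[of z g] by simp
  qed
  define v' where "v' = v - (\<Sum>g\<in>G. scV (iph v g) g)"
  have "v' \<in> orth_compl G" unfolding orth_compl_def
  proof (intro CollectI ballI)
    fix g0 assume g0: "g0 \<in> G"
    have "iph v' g0 = iph v g0 - (\<Sum>g\<in>G. iph v g * iph g g0)"
      unfolding v'_def by (simp add: i_diff i_sum i_sc H.ip_diff_left H.ip_sum_left H.ip_sc_left)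
    also have "(\<Sum>g\<in>G. iph v g * iph g g0) = (\<Sum>g\<in>G. if g = g0 then iph v g0 else 0)"
      using G(2) g0 unfolding orthonormal_def by (intro sum.cong) auto
    finally show "iph v' g0 = 0" using G(1) g0 by simp
  qed
  have "a z v = a z v' + (\<Sum>g\<in>G. cnj (iph v g) * a z g)"
    unfolding v'_def by (simp add: a_diff_right a_sum_right a_sc_right)
  also have "\<dots> = complex_of_real m * iph z v'" using a_z_orth on_compl[OF \<open>v' \<in> orth_compl G\<close>] by simp
  also have "iph z v' = iph z v - (\<Sum>g\<in>G. cnj (iph v g) * iph z g)"
    unfolding v'_def by (simp add: i_diff i_sum i_sc H.ip_diff_right H.ip_sum_right H.ip_sc_right)
  finally show "a z v = complex_of_real m * iph z v" using z_orth by simp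
qed

lemma card_neumann_eigvecs_le_multiplicity:
  assumes eN: "eig_enum scH (assoc_op ipH i UNIV a) NN lamN"
    and A: "finite A" "orthonormal A" "\<forall>g\<in>A. neumann_eigvec \<mu> g"
  shows "card A \<le> card (eig_indices NN lamN \<mu>)"
proof -
  have "enat (card (i ` A)) \<le> cdim scH (eigsp scH (assoc_op ipH i UNIV a) \<mu>)"
    using A orthonormal_lin_indep unfolding eigsp_neumann by (intro cdim_ge) auto
  also have "\<dots> = enat (card (eig_indices NN lamN \<mu>))" by (rule eig_enum_multiplicity[OF eN])
  finally show ?thesis using card_image[OF inj_on_subset[OF inj_i subset_UNIV]] by simp
qed

lemma card_orthonormal_eigvecs_below:
  assumes eN: "eig_enum scH (assoc_op ipH i UNIV a) NN lamN" and "enat (Suc n) \<le> NN"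
    and G: "finite G" "orthonormal G" "\<forall>g\<in>G. \<exists>\<nu> < lamN (Suc n). neumann_eigvec \<nu> g"
  shows "card G \<le> n"
proof -
  obtain ev where ev: "\<And>g. g \<in> G \<Longrightarrow> ev g < lamN (Suc n) \<and> neumann_eigvec (ev g) g"
    using G(3) by metis
  have "card G = card (\<Union>\<mu>\<in>ev ` G. {g\<in>G. ev g = \<mu>})" by (rule arg_cong[where f = card]) auto
  also have "\<dots> = (\<Sum>\<mu>\<in>ev ` G. card {g\<in>G. ev g = \<mu>})"
    using G(1) by (intro card_UN_disjoint) auto
  also have "\<dots> \<le> (\<Sum>\<mu>\<in>ev ` G. card (eig_indices NN lamN \<mu>))"
  proof (intro sum_mono)
    fix \<mu>
    have "orthonormal {g\<in>G. ev g = \<mu>}" using G(2) unfolding orthonormal_def by blast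
    then show "card {g\<in>G. ev g = \<mu>} \<le> card (eig_indices NN lamN \<mu>)"
      using G(1) ev by (intro card_neumann_eigvecs_le_multiplicity[OF eN]) auto
  qed
  also have "\<dots> = card (\<Union>\<mu>\<in>ev ` G. eig_indices NN lamN \<mu>)"
    using G(1) eig_enum_finite_indices[OF eN]
    by (intro card_UN_disjoint[symmetric]) (auto simp: eig_indices_def)
  also have "\<dots> \<le> card {1..n}"
  proof (intro card_mono subsetI)
    fix k assume "k \<in> (\<Union>\<mu>\<in>ev ` G. eig_indices NN lamN \<mu>)"
    then obtain g where g: "g \<in> G" "1 \<le> k" "enat k \<le> NN" "lamN k = ev g"
      unfolding eig_indices_def by blast
    have "k \<le> n"
    proof (rule ccontr)
      assume "\<not> k \<le> n"
      then have "lamN (Suc n) \<le> lamN k" using eig_enum_mono[OF eN] g(3) by simp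
      then show False using ev[OF g(1)] g(4) by simp
    qed
    then show "k \<in> {1..n}" using g by simp
  qed simp
  finally show ?thesis by simp
qed

lemma orthonormal_eigvecs_extend:
  assumes G: "finite G" "orthonormal G" "\<forall>g\<in>G. \<exists>\<nu>. neumann_eigvec \<nu> g"
    and u: "u \<in> orth_compl G" "Re (a u u) < \<kappa> * (nH (i u))\<^sup>2"
  obtains z m where "m < \<kappa>" "neumann_eigvec m z" "z \<notin> G" "orthonormal (insert z G)"
proof -
  have "u \<noteq> 0" using u(2) by auto
  then obtain z m where z: "z \<in> orth_compl G" "nH (i z) = 1" "Re (a z z) = m"
    and min: "\<And>w. w \<in> orth_compl G \<Longrightarrow> m * (nH (i w))\<^sup>2 \<le> Re (a w w)"
    using rayleigh_minimizer_exists[OF orth_compl_closed_subspace u(1)] by blast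
  have "m * (nH (i u))\<^sup>2 < \<kappa> * (nH (i u))\<^sup>2" using min[OF u(1)] u(2) by simp
  then have "m < \<kappa>" using \<open>u \<noteq> 0\<close> H.nrm_pos_iff by (simp add: mult_less_cancel_right)
  moreover have "neumann_eigvec m z"
    using constrained_minimizer_eigvec[OF G z(1) _ min] z(2,3) by simp
  moreover have zg: "iph z g = 0" if "g \<in> G" for g
    using z(1) that unfolding orth_compl_def by blast
  moreover have gz: "iph g z = 0" if "g \<in> G" for g
    using zg[OF that] H.ip_sym[of "i g" "i z"] by simp
  moreover have zz: "iph z z = 1" using H.ip_self_eq_nrm_sq[of "i z"] z(2) by simp
  ultimately have "z \<notin> G" by force
  moreover have "orthonormal (insert z G)"
    using G(2) zg gz zz \<open>z \<notin> G\<close> unfolding orthonormal_def by auto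
  ultimately show thesis using \<open>m < \<kappa>\<close> \<open>neumann_eigvec m z\<close> that by blast
qed

text \<open>Built greedily: successive constrained minimizers are orthonormal eigenvectors with
  eigenvalues below \<lambda>N(n+1), there are at most n of those, so the process stops with the
  Rayleigh quotient on the orthogonal complement bounded below by \<lambda>N(n+1).\<close>

lemma neumann_min_max:
  assumes eN: "eig_enum scH (assoc_op ipH i UNIV a) NN lamN" and nn: "enat (Suc n) \<le> NN"
  obtains G where "finite G" "card G \<le> n" "orthonormal G" "\<forall>g\<in>G. \<exists>\<nu>. neumann_eigvec \<nu> g"
    "\<And>u. u \<in> orth_compl G \<Longrightarrow> lamN (Suc n) * (nH (i u))\<^sup>2 \<le> Re (a u u)"
proof -
  let ?\<kappa> = "lamN (Suc n)"
  let ?done = "\<exists>G. finite G \<and> card G \<le> n \<and> orthonormal G \<and> (\<forall>g\<in>G. \<exists>\<nu>. neumann_eigvec \<nu> g) \<and>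
           (\<forall>u\<in>orth_compl G. ?\<kappa> * (nH (i u))\<^sup>2 \<le> Re (a u u))"
  have "?done \<or> (\<exists>G. finite G \<and> card G = k \<and> orthonormal G \<and> (\<forall>g\<in>G. \<exists>\<nu><?\<kappa>. neumann_eigvec \<nu> g))"
    for k
  proof (induction k)
    case 0
    then show ?case by (intro disjI2 exI[of _ "{}"]) (simp add: orthonormal_def)
  next
    case (Suc k)
    show ?case
    proof (cases ?done)
      case False
      then obtain G where G: "finite G" "card G = k" "orthonormal G"
        "\<forall>g\<in>G. \<exists>\<nu><?\<kappa>. neumann_eigvec \<nu> g"
        using Suc.IH by blast
      have "card G \<le> n" using card_orthonormal_eigvecs_below[OF eN nn G(1,3,4)] .
      moreover have G_eigvecs: "\<forall>g\<in>G. \<exists>\<nu>. neumann_eigvec \<nu> g" using G(4) by blast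
      ultimately obtain u where u: "u \<in> orth_compl G" "Re (a u u) < ?\<kappa> * (nH (i u))\<^sup>2"
        using False G(1,3) by (meson not_le)
      obtain z m where "m < ?\<kappa>" "neumann_eigvec m z" "z \<notin> G" "orthonormal (insert z G)"
        using orthonormal_eigvecs_extend[OF G(1,3) G_eigvecs u] .
      then show ?thesis using G by (intro disjI2 exI[of _ "insert z G"]) auto
    qed simp
  qed
  moreover have "\<not> (\<exists>G. finite G \<and> card G = Suc n \<and> orthonormal G \<and>
      (\<forall>g\<in>G. \<exists>\<nu><?\<kappa>. neumann_eigvec \<nu> g))"
  proof
    assume "\<exists>G. finite G \<and> card G = Suc n \<and> orthonormal G \<and> (\<forall>g\<in>G. \<exists>\<nu><?\<kappa>. neumann_eigvec \<nu> g)"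
    then obtain G where "card G = Suc n" "finite G" "orthonormal G" "\<forall>g\<in>G. \<exists>\<nu><?\<kappa>. neumann_eigvec \<nu> g"
      by blast
    then have "card G \<le> n" using card_orthonormal_eigvecs_below[OF eN nn] by blast
    then show False using \<open>card G = Suc n\<close> by simp
  qed
  ultimately obtain G where "finite G" "card G \<le> n" "orthonormal G" "\<forall>g\<in>G. \<exists>\<nu>. neumann_eigvec \<nu> g"
    "\<forall>u\<in>orth_compl G. ?\<kappa> * (nH (i u))\<^sup>2 \<le> Re (a u u)"
    by blast
  then show thesis by (intro that) auto
qed

section \<open>Dirichlet eigenvectors\<close>

lemma dirichlet_eigvec_lincomb:
  assumes "\<forall>y\<in>F. dirichlet_eigvec \<nu> y" shows "dirichlet_eigvec \<nu> (\<Sum>y\<in>F. scV (c y) y)"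
  unfolding dirichlet_eigvec_def
proof (intro conjI allI impI)
  show "j (\<Sum>y\<in>F. scV (c y) y) = 0" using assms by (simp add: j_sum j_sc dirichlet_eigvec_def)
  fix v assume "j v = 0"
  then have "a y v = complex_of_real \<nu> * iph y v" if "y \<in> F" for y
    using assms that unfolding dirichlet_eigvec_def by blast
  then have "a (\<Sum>y\<in>F. scV (c y) y) v = (\<Sum>y\<in>F. complex_of_real \<nu> * (c y * iph y v))"
    by (simp add: a_sum_left a_sc_left mult.left_commute)
  also have "\<dots> = complex_of_real \<nu> * iph (\<Sum>y\<in>F. scV (c y) y) v"
    by (simp add: i_sum i_sc H.ip_sum_left H.ip_sc_left sum_distrib_left)
  finally show "a (\<Sum>y\<in>F. scV (c y) y) v = complex_of_real \<nu> * iph (\<Sum>y\<in>F. scV (c y) y) v" .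
qed

lemma dirichlet_eigvecs_orthogonal:
  assumes "dirichlet_eigvec \<nu> d" "dirichlet_eigvec \<nu>' d'" "\<nu> \<noteq> \<nu>'" shows "iph d d' = 0"
proof -
  have "a d d' = complex_of_real \<nu> * iph d d'" "a d' d = complex_of_real \<nu>' * iph d' d"
    using assms(1,2) unfolding dirichlet_eigvec_def by blast+
  then have "complex_of_real \<nu> * iph d d' = complex_of_real \<nu>' * iph d d'"
    using a_sym[of d d'] H.ip_sym[of "i d'" "i d"] by auto
  then have "complex_of_real (\<nu> - \<nu>') * iph d d' = 0" by (simp add: left_diff_distrib)
  then show ?thesis using assms(3) by simp
qed

lemma dirichlet_eigvec_basis:
  assumes eD: "eig_enum scH (assoc_op ipH i {u. j u = 0} a) ND lamD"
  obtains Y where "finite Y" "lin_indep scV Y" "card Y = card (eig_indices ND lamD \<nu>)"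
    "\<forall>y\<in>Y. dirichlet_eigvec \<nu> y" "0 \<notin> Y"
proof -
  obtain F where F: "finite F" "F \<subseteq> i ` {d. dirichlet_eigvec \<nu> d}" "lin_indep scH F"
    "card F = card (eig_indices ND lamD \<nu>)"
    using cdim_attained[OF eig_enum_multiplicity[OF eD]] unfolding eigsp_dirichlet by blast
  define Y where "Y = {y. i y \<in> F}"
  have inj: "inj_on i Y" using inj_on_subset[OF inj_i subset_UNIV] .
  have "i ` Y = F" using F(2) unfolding Y_def by blast
  then have "finite Y" "card Y = card F" "lin_indep scV Y"
    using F(1,3) finite_imageD[OF _ inj] card_image[OF inj] lin_indep_of_linear_image[OF i_linear inj]
    by auto
  moreover have "\<forall>y\<in>Y. dirichlet_eigvec \<nu> y" using F(2) inj_i unfolding Y_def by (auto dest: injD)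
  moreover have "0 \<notin> Y" using H.zero_notin_lin_indep[OF F(3)] unfolding Y_def by simp
  ultimately show thesis using F(4) that by simp
qed

lemma orthogonal_dirichlet_eigvecs_sum:
  assumes "finite S" "\<And>\<nu>. \<nu> \<in> S \<Longrightarrow> dirichlet_eigvec \<nu> (w \<nu>)"
  shows "iph (\<Sum>\<nu>\<in>S. w \<nu>) (\<Sum>\<nu>\<in>S. w \<nu>) = (\<Sum>\<nu>\<in>S. iph (w \<nu>) (w \<nu>))"
    and "a (\<Sum>\<nu>\<in>S. w \<nu>) (\<Sum>\<nu>\<in>S. w \<nu>) = (\<Sum>\<nu>\<in>S. complex_of_real \<nu> * iph (w \<nu>) (w \<nu>))"
proof -
  have orth: "iph (w \<nu>) (w \<nu>') = 0" if "\<nu> \<in> S" "\<nu>' \<in> S" "\<nu> \<noteq> \<nu>'" for \<nu> \<nu>'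
    using dirichlet_eigvecs_orthogonal assms(2) that by blast
  have eig: "a (w \<nu>) (w \<nu>') = complex_of_real \<nu> * iph (w \<nu>) (w \<nu>')" if "\<nu> \<in> S" "\<nu>' \<in> S" for \<nu> \<nu>'
    using assms(2) that unfolding dirichlet_eigvec_def by blast
  have "iph (\<Sum>\<nu>\<in>S. w \<nu>) (\<Sum>\<nu>\<in>S. w \<nu>) = (\<Sum>\<nu>\<in>S. \<Sum>\<nu>'\<in>S. iph (w \<nu>) (w \<nu>'))"
    by (simp add: i_sum H.ip_sum_left H.ip_sum_right) (rule sum.swap)
  also have "\<dots> = (\<Sum>\<nu>\<in>S. \<Sum>\<nu>'\<in>S. if \<nu>' = \<nu> then iph (w \<nu>) (w \<nu>) else 0)"
    using orth by (intro sum.cong refl) auto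
  finally show "iph (\<Sum>\<nu>\<in>S. w \<nu>) (\<Sum>\<nu>\<in>S. w \<nu>) = (\<Sum>\<nu>\<in>S. iph (w \<nu>) (w \<nu>))"
    using assms(1) by simp
  have "a (\<Sum>\<nu>\<in>S. w \<nu>) (\<Sum>\<nu>\<in>S. w \<nu>) = (\<Sum>\<nu>\<in>S. \<Sum>\<nu>'\<in>S. a (w \<nu>) (w \<nu>'))"
    by (simp add: a_sum_left a_sum_right) (rule sum.swap)
  also have "\<dots> = (\<Sum>\<nu>\<in>S. \<Sum>\<nu>'\<in>S. if \<nu>' = \<nu> then complex_of_real \<nu> * iph (w \<nu>) (w \<nu>) else 0)"
    using orth eig by (intro sum.cong refl) auto
  finally show "a (\<Sum>\<nu>\<in>S. w \<nu>) (\<Sum>\<nu>\<in>S. w \<nu>) = (\<Sum>\<nu>\<in>S. complex_of_real \<nu> * iph (w \<nu>) (w \<nu>))"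
    using assms(1) by simp
qed

lemma dirichlet_eigvec_sets_disjoint:
  assumes "lin_indep scV Y" "\<forall>y\<in>Y. dirichlet_eigvec \<nu> y" "\<forall>y\<in>Y'. dirichlet_eigvec \<nu>' y" "\<nu> \<noteq> \<nu>'"
  shows "Y \<inter> Y' = {}"
proof -
  have "y = 0" if "y \<in> Y" "y \<in> Y'" for y
    using dirichlet_eigvecs_orthogonal[of \<nu> y \<nu>' y] assms(2-4) that iph_self_eq_0_iff by simp
  then show ?thesis using V.zero_notin_lin_indep[OF assms(1)] by blast
qed

context
  fixes S :: "real set" and Ys :: "real \<Rightarrow> 'v set"
  assumes S: "finite S"
    and Ys: "\<And>\<nu>. \<nu> \<in> S \<Longrightarrow> finite (Ys \<nu>) \<and> lin_indep scV (Ys \<nu>) \<and> (\<forall>y\<in>Ys \<nu>. dirichlet_eigvec \<nu> y)"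
begin

lemma lincomb_dirichlet_eigvecs_union:
  "(\<Sum>y\<in>(\<Union>\<nu>\<in>S. Ys \<nu>). scV (c y) y) = (\<Sum>\<nu>\<in>S. \<Sum>y\<in>Ys \<nu>. scV (c y) y)"
proof (rule sum.UNION_disjoint[OF S])
  show "\<forall>\<nu>\<in>S. finite (Ys \<nu>)" using Ys by blast
  show "\<forall>\<nu>\<in>S. \<forall>\<nu>'\<in>S. \<nu> \<noteq> \<nu>' \<longrightarrow> Ys \<nu> \<inter> Ys \<nu>' = {}"
    using Ys dirichlet_eigvec_sets_disjoint by blast
qed

lemma lin_indep_dirichlet_eigvecs_union: "lin_indep scV (\<Union>\<nu>\<in>S. Ys \<nu>)"
  unfolding lin_indep_def
proof (intro allI impI ballI)
  fix c y assume sum: "(\<Sum>y\<in>(\<Union>\<nu>\<in>S. Ys \<nu>). scV (c y) y) = 0" and "y \<in> (\<Union>\<nu>\<in>S. Ys \<nu>)"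
  then obtain \<nu>0 where \<nu>0: "\<nu>0 \<in> S" "y \<in> Ys \<nu>0" by blast
  define w where "w \<nu> = (\<Sum>y\<in>Ys \<nu>. scV (c y) y)" for \<nu>
  have w_eig: "dirichlet_eigvec \<nu> (w \<nu>)" if "\<nu> \<in> S" for \<nu>
    unfolding w_def using Ys[OF that] by (intro dirichlet_eigvec_lincomb) blast
  have "0 = iph (\<Sum>\<nu>\<in>S. w \<nu>) (w \<nu>0)" using sum unfolding lincomb_dirichlet_eigvecs_union w_def by simp
  also have "\<dots> = (\<Sum>\<nu>\<in>S. iph (w \<nu>) (w \<nu>0))" by (simp add: i_sum H.ip_sum_left)
  also have "\<dots> = (\<Sum>\<nu>\<in>S. if \<nu> = \<nu>0 then iph (w \<nu>0) (w \<nu>0) else 0)"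
    using dirichlet_eigvecs_orthogonal[OF w_eig w_eig] \<nu>0(1) by (intro sum.cong) auto
  also have "\<dots> = iph (w \<nu>0) (w \<nu>0)" using S \<nu>0(1) by simp
  finally have "w \<nu>0 = 0" using iph_self_eq_0_iff by simp
  then show "c y = 0" using lin_indep_D[of scV "Ys \<nu>0" c y] Ys[OF \<nu>0(1)] \<nu>0(2) unfolding w_def by blast
qed

lemma rayleigh_le_on_dirichlet_eigvecs_union:
  fixes c :: "'v \<Rightarrow> complex"
  assumes "\<And>\<nu>. \<nu> \<in> S \<Longrightarrow> \<nu> \<le> \<mu>"
  defines "x \<equiv> \<Sum>y\<in>(\<Union>\<nu>\<in>S. Ys \<nu>). scV (c y) y"
  shows "Re (a x x) \<le> \<mu> * (nH (i x))\<^sup>2"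
proof -
  define w where "w \<nu> = (\<Sum>y\<in>Ys \<nu>. scV (c y) y)" for \<nu>
  have w_eig: "dirichlet_eigvec \<nu> (w \<nu>)" if "\<nu> \<in> S" for \<nu>
    unfolding w_def using Ys[OF that] by (intro dirichlet_eigvec_lincomb) blast
  have x: "x = (\<Sum>\<nu>\<in>S. w \<nu>)" unfolding x_def w_def lincomb_dirichlet_eigvecs_union ..
  have "Re (a x x) = (\<Sum>\<nu>\<in>S. \<nu> * (nH (i (w \<nu>)))\<^sup>2)"
    using orthogonal_dirichlet_eigvecs_sum(2)[OF S w_eig] H.ip_self_eq_nrm_sq unfolding x
    by (simp add: Re_sum)
  also have "\<dots> \<le> (\<Sum>\<nu>\<in>S. \<mu> * (nH (i (w \<nu>)))\<^sup>2)" using assms(1) by (intro sum_mono mult_right_mono) auto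
  also have "\<dots> = \<mu> * (nH (i x))\<^sup>2"
    using orthogonal_dirichlet_eigvecs_sum(1)[OF S w_eig] unfolding x H.nrm_sq
    by (simp add: sum_distrib_left Re_sum)
  finally show ?thesis .
qed

end

lemma dirichlet_test_space:
  assumes eD: "eig_enum scH (assoc_op ipH i {u. j u = 0} a) ND lamD" and n: "enat n \<le> ND"
  obtains Y where "finite Y" "n \<le> card Y" "\<forall>y\<in>Y. j y = 0" "lin_indep scV Y"
    "\<And>c. Re (a (\<Sum>y\<in>Y. scV (c y) y) (\<Sum>y\<in>Y. scV (c y) y))
      \<le> lamD n * (nH (i (\<Sum>y\<in>Y. scV (c y) y)))\<^sup>2"
proof -
  have "\<exists>Y. finite Y \<and> lin_indep scV Y \<and> card Y = card (eig_indices ND lamD \<nu>) \<and>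
      (\<forall>y\<in>Y. dirichlet_eigvec \<nu> y)" for \<nu>
    using dirichlet_eigvec_basis[OF eD, of \<nu>] by metis
  then obtain Ys where Ys: "\<And>\<nu>. finite (Ys \<nu>) \<and> lin_indep scV (Ys \<nu>) \<and>
      card (Ys \<nu>) = card (eig_indices ND lamD \<nu>) \<and> (\<forall>y\<in>Ys \<nu>. dirichlet_eigvec \<nu> y)"
    by metis
  define S where "S = lamD ` {1..n}"
  have S: "finite S" unfolding S_def by simp
  have "(\<Union>\<nu>\<in>S. {k\<in>{1..n}. lamD k = \<nu>}) = {1..n}" unfolding S_def by blast
  then have "n = card (\<Union>\<nu>\<in>S. {k\<in>{1..n}. lamD k = \<nu>})" by simp
  also have "\<dots> = (\<Sum>\<nu>\<in>S. card {k\<in>{1..n}. lamD k = \<nu>})" using S by (intro card_UN_disjoint) auto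
  also have "\<dots> \<le> (\<Sum>\<nu>\<in>S. card (Ys \<nu>))"
  proof (intro sum_mono)
    fix \<nu>
    have "{k\<in>{1..n}. lamD k = \<nu>} \<subseteq> eig_indices ND lamD \<nu>"
      using n unfolding eig_indices_def by (auto intro: order_trans[of _ "enat n"])
    then show "card {k\<in>{1..n}. lamD k = \<nu>} \<le> card (Ys \<nu>)"
      using Ys[of \<nu>] eig_enum_finite_indices[OF eD] by (simp add: card_mono)
  qed
  also have "\<dots> = card (\<Union>\<nu>\<in>S. Ys \<nu>)"
    using S Ys dirichlet_eigvec_sets_disjoint by (intro card_UN_disjoint[symmetric]) blast+
  finally have "n \<le> card (\<Union>\<nu>\<in>S. Ys \<nu>)" .
  moreover have "\<forall>y\<in>(\<Union>\<nu>\<in>S. Ys \<nu>). j y = 0" using Ys unfolding dirichlet_eigvec_def by blast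
  moreover have "\<nu> \<le> lamD n" if "\<nu> \<in> S" for \<nu>
    using that eig_enum_mono[OF eD _ _ n] unfolding S_def by auto
  ultimately show thesis
    using S Ys lin_indep_dirichlet_eigvecs_union rayleigh_le_on_dirichlet_eigvecs_union
    by (intro that[of "\<Union>\<nu>\<in>S. Ys \<nu>"]) auto
qed

lemma dirichlet_eigenvalue_pos:
  assumes eD: "eig_enum scH (assoc_op ipH i {u. j u = 0} a) ND lamD"
    and I: "\<not> (\<exists>u \<mu>. j u = 0 \<and> i u \<noteq> 0 \<and> (i u, scH \<mu> (i u)) \<in> assoc_op ipH i UNIV a)"
    and n: "1 \<le> n" "enat n \<le> ND"
  shows "lamD n > 0"
proof -
  let ?\<mu> = "lamD n"
  obtain Y where Y: "finite Y" "card Y = card (eig_indices ND lamD ?\<mu>)"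
    "\<forall>y\<in>Y. dirichlet_eigvec ?\<mu> y" "0 \<notin> Y"
    using dirichlet_eigvec_basis[OF eD] by metis
  have "n \<in> eig_indices ND lamD ?\<mu>" using n unfolding eig_indices_def by simp
  then have "Y \<noteq> {}" using Y(2) eig_enum_finite_indices[OF eD] by force
  then obtain d where d: "dirichlet_eigvec ?\<mu> d" "d \<noteq> 0" using Y(3,4) by blast
  then have "Re (a d d) = ?\<mu> * (nH (i d))\<^sup>2"
    using H.ip_self_eq_nrm_sq[of "i d"] unfolding dirichlet_eigvec_def by simp
  moreover have "(nH (i d))\<^sup>2 > 0" using d(2) H.nrm_pos_iff by simp
  ultimately have "?\<mu> \<ge> 0" using a_self_nonneg[of d] by (simp add: zero_le_mult_iff)
  moreover have "?\<mu> \<noteq> 0"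
  proof
    assume "?\<mu> = 0"
    \<comment> \<open>then d minimizes a(u,u) \<ge> 0 itself, so it is a Neumann eigenvector for 0\<close>
    then have "a d v = complex_of_real 0 * iph d v" for v
      using \<open>Re (a d d) = ?\<mu> * (nH (i d))\<^sup>2\<close> a_self_nonneg by (intro euler_lagrange) simp_all
    then have "(i d, scH (complex_of_real 0) (i d)) \<in> assoc_op ipH i UNIV a"
      by (intro neumann_eigvec_in_graph) (simp add: neumann_eigvec_def)
    moreover have "j d = 0" "i d \<noteq> 0" using d unfolding dirichlet_eigvec_def by simp_all
    ultimately show False using I by blast
  qed
  ultimately show ?thesis by simp
qed

section \<open>Isotropic vectors of N(\<mu>)\<close>

definition shifted_form :: "real \<Rightarrow> 'v \<Rightarrow> 'v \<Rightarrow> complex" where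
  "shifted_form t u v = a u v - complex_of_real t * iph u v"

lemma Ngraph_iff:
  "(\<phi>, \<psi>) \<in> Ngraph ipH ipK i j a t \<longleftrightarrow> (\<exists>u. \<phi> = j u \<and> (\<forall>v. shifted_form t u v = ipK \<psi> (j v)))"
  unfolding Ngraph_def shifted_form_def by blast

lemma Re_shifted_form_self: "Re (shifted_form t x x) = Re (a x x) - t * (nH (i x))\<^sup>2"
  unfolding shifted_form_def using H.ip_self_eq_nrm_sq[of "i x"] by simp

lemma shifted_form_self_add:
  assumes "shifted_form t u u = 0" "shifted_form t u w = 0"
  shows "shifted_form t (scV c u + w) (scV c u + w) = shifted_form t w w"
proof -
  have "shifted_form t w u = cnj (shifted_form t u w)"
    unfolding shifted_form_def using a_sym[of w u] H.ip_sym[of "i w" "i u"] by simp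
  then have "shifted_form t w u = 0" using assms(2) by simp
  moreover have "shifted_form t (scV c u + w) (scV c u + w) = c * cnj c * shifted_form t u u
      + c * shifted_form t u w + cnj c * shifted_form t w u + shifted_form t w w"
    unfolding shifted_form_def
    by (simp add: a_add_left a_add_right a_sc_left a_sc_right i_add i_sc
        H.ip_add_left H.ip_add_right H.ip_sc_left H.ip_sc_right algebra_simps)
  ultimately show ?thesis using assms by simp
qed

lemma exists_lincomb_in_orth_compl:
  assumes "finite G" "finite I" "card G < card I"
  obtains c where "\<exists>k\<in>I. c k \<noteq> 0" "(\<Sum>k\<in>I. scV (c k) k) \<in> orth_compl G"
proof -
  obtain c where "\<exists>k\<in>I. c k \<noteq> 0" "\<forall>g\<in>G. (\<Sum>k\<in>I. iph k g * c k) = 0"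
    using homogeneous_system_nontrivial_solution[OF assms, of "\<lambda>k g. iph k g"] by blast
  moreover have "iph (\<Sum>k\<in>I. scV (c k) k) g = (\<Sum>k\<in>I. iph k g * c k)" for g
    by (simp add: i_sum i_sc H.ip_sum_left H.ip_sc_left mult.commute)
  ultimately show thesis using that unfolding orth_compl_def by simp
qed

lemma isotropic_test_vector:
  assumes G: "finite G" "card G \<le> n"
    and Y: "finite Y" "n \<le> card Y" "\<forall>y\<in>Y. j y = 0" "lin_indep scV Y"
      "\<And>c. Re (a (\<Sum>y\<in>Y. scV (c y) y) (\<Sum>y\<in>Y. scV (c y) y)) \<le> \<mu> * (nH (i (\<Sum>y\<in>Y. scV (c y) y)))\<^sup>2"
    and \<phi>: "(\<phi>, \<psi>) \<in> Ngraph ipH ipK i j a \<mu>" "ipK \<psi> \<phi> = 0" "\<phi> \<noteq> 0"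
  obtains x c where "x \<in> orth_compl G" "x \<noteq> 0" "j x = scK c \<phi>" "Re (a x x) \<le> \<mu> * (nH (i x))\<^sup>2"
proof -
  obtain u where u: "\<phi> = j u" "\<And>v. shifted_form \<mu> u v = ipK \<psi> (j v)" using \<phi>(1) Ngraph_iff by metis
  have "u \<notin> Y" using Y(3) u(1) \<phi>(3) by blast
  then have "card G < card (insert u Y)" using Y(1,2) G(2) by simp
  then obtain c where c: "\<exists>k\<in>insert u Y. c k \<noteq> 0" "(\<Sum>k\<in>insert u Y. scV (c k) k) \<in> orth_compl G"
    using exists_lincomb_in_orth_compl[OF G(1)] Y(1) by blast
  define w where "w = (\<Sum>y\<in>Y. scV (c y) y)"
  define x where "x = scV (c u) u + w"
  have "x \<in> orth_compl G" using c(2) \<open>u \<notin> Y\<close> Y(1) unfolding x_def w_def by simp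
  have "j w = 0" unfolding w_def using Y(3) by (simp add: j_sum j_sc)
  then have "j x = scK (c u) \<phi>" unfolding x_def using u(1) by (simp add: j_add j_sc)
  have "shifted_form \<mu> x x = shifted_form \<mu> w w"
    unfolding x_def using u \<phi>(2) \<open>j w = 0\<close> by (intro shifted_form_self_add) simp_all
  then have "Re (a x x) \<le> \<mu> * (nH (i x))\<^sup>2"
    using Re_shifted_form_self[of \<mu> x] Re_shifted_form_self[of \<mu> w] Y(5)[of c] unfolding w_def by simp
  moreover have "x \<noteq> 0"
  proof (cases "c u = 0")
    case False
    then show ?thesis using \<open>j x = scK (c u) \<phi>\<close> \<phi>(3) K.nrm_sc[of "c u" \<phi>] K.nrm_pos_iff by force
  next
    case True
    then obtain y where "y \<in> Y" "c y \<noteq> 0" using c(1) by blast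
    then show ?thesis using True lin_indep_D[OF Y(4), of c y] unfolding x_def w_def by auto
  qed
  ultimately show thesis using that \<open>x \<in> orth_compl G\<close> \<open>j x = scK (c u) \<phi>\<close> by blast
qed

lemma isotropic_set_subset_j_eigvecs:
  assumes G: "finite G" "card G \<le> n" "orthonormal G" "\<forall>g\<in>G. \<exists>\<nu>. neumann_eigvec \<nu> g"
      "\<And>u. u \<in> orth_compl G \<Longrightarrow> \<kappa> * (nH (i u))\<^sup>2 \<le> Re (a u u)"
    and Y: "finite Y" "n \<le> card Y" "\<forall>y\<in>Y. j y = 0" "lin_indep scV Y"
      "\<And>c. Re (a (\<Sum>y\<in>Y. scV (c y) y) (\<Sum>y\<in>Y. scV (c y) y)) \<le> \<mu> * (nH (i (\<Sum>y\<in>Y. scV (c y) y)))\<^sup>2"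
    and "\<mu> \<le> \<kappa>"
    and I: "\<not> (\<exists>u \<mu>. j u = 0 \<and> i u \<noteq> 0 \<and> (i u, scH \<mu> (i u)) \<in> assoc_op ipH i UNIV a)"
  shows "isotropic_set ipK (Ngraph ipH ipK i j a \<mu>) \<subseteq> j ` {g. neumann_eigvec \<mu> g}"
proof
  fix \<phi> assume "\<phi> \<in> isotropic_set ipK (Ngraph ipH ipK i j a \<mu>)"
  then obtain \<psi> where \<phi>: "(\<phi>, \<psi>) \<in> Ngraph ipH ipK i j a \<mu>" "ipK \<psi> \<phi> = 0"
    unfolding isotropic_set_def Ncirc_def by blast
  show "\<phi> \<in> j ` {g. neumann_eigvec \<mu> g}"
  proof (cases "\<phi> = 0")
    case True
    then show ?thesis by (auto intro!: image_eqI[of _ _ 0] simp: neumann_eigvec_def)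
  next
    case False
    obtain x c where x: "x \<in> orth_compl G" "x \<noteq> 0" "j x = scK c \<phi>" "Re (a x x) \<le> \<mu> * (nH (i x))\<^sup>2"
      using isotropic_test_vector[OF G(1,2) Y \<phi> False] .
    have lower: "\<mu> * (nH (i w))\<^sup>2 \<le> Re (a w w)" if "w \<in> orth_compl G" for w
      using G(5)[OF that] \<open>\<mu> \<le> \<kappa>\<close> by (smt (verit) mult_right_mono zero_le_power2)
    then have "Re (a x x) = \<mu> * (nH (i x))\<^sup>2" using x(1,4) by (simp add: eq_iff)
    then have eig: "neumann_eigvec \<mu> x" using constrained_minimizer_eigvec[OF G(1,3,4) x(1)] lower by blast
    have "c \<noteq> 0"
    proof
      assume "c = 0"
      then have "j x = 0" using x(3) by simp
      then show False using I neumann_eigvec_in_graph[OF eig] x(2) by auto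
    qed
    have "neumann_eigvec \<mu> (scV (1 / c) x)"
      using eig unfolding neumann_eigvec_def by (simp add: a_sc_left i_sc H.ip_sc_left)
    moreover have "j (scV (1 / c) x) = \<phi>" using x(3) \<open>c \<noteq> 0\<close> by (simp add: j_sc K.sc_mult[symmetric])
    ultimately show ?thesis by blast
  qed
qed

lemma lincomb_j_neumann_eigvecs:
  assumes "finite F" "F \<subseteq> j ` {g. neumann_eigvec \<mu> g}"
  shows "(\<Sum>x\<in>F. scK (c x) x) \<in> j ` {g. neumann_eigvec \<mu> g}"
  using assms
proof (induction F rule: finite_induct)
  case empty
  have "neumann_eigvec \<mu> 0" by (simp add: neumann_eigvec_def)
  then show ?case by (auto intro!: image_eqI[of _ _ 0])
next
  case (insert x F)
  obtain g h where "x = j g" "neumann_eigvec \<mu> g" "(\<Sum>x\<in>F. scK (c x) x) = j h" "neumann_eigvec \<mu> h"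
    using insert by blast
  moreover have "neumann_eigvec \<mu> (scV (c x) g + h)" using calculation
    unfolding neumann_eigvec_def by (simp add: a_add_left a_sc_left i_add i_sc H.ip_add_left H.ip_sc_left
      distrib_left mult.left_commute)
  ultimately show ?case using insert.hyps by (auto intro!: image_eqI[of _ _ "scV (c x) g + h"] simp: j_add j_sc)
qed

lemma cdim_cspan_j_neumann_eigvecs_le:
  assumes eN: "eig_enum scH (assoc_op ipH i UNIV a) NN lamN"
    and X: "X \<subseteq> j ` {g. neumann_eigvec \<mu> g}"
  shows "cdim scK (cspan scK X) \<le> enat (card (eig_indices NN lamN \<mu>))"
proof (rule cdim_le)
  fix F assume F: "finite F" "F \<subseteq> cspan scK X" "lin_indep scK F"
  have span: "cspan scK X \<subseteq> j ` {g. neumann_eigvec \<mu> g}"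
  proof
    fix y assume "y \<in> cspan scK X"
    then obtain F' c where F': "finite F'" "F' \<subseteq> X" and y: "y = (\<Sum>x\<in>F'. scK (c x) x)"
      unfolding cspan_def by blast
    have "F' \<subseteq> j ` {g. neumann_eigvec \<mu> g}" using F'(2) X by (rule order_trans)
    then show "y \<in> j ` {g. neumann_eigvec \<mu> g}" unfolding y by (rule lincomb_j_neumann_eigvecs[OF F'(1)])
  qed
  have "F \<subseteq> j ` {g. neumann_eigvec \<mu> g}" using F(2) span by (rule order_trans)
  then obtain U where U: "U \<subseteq> {g. neumann_eigvec \<mu> g}" "inj_on j U" "F = j ` U"
    unfolding subset_image_inj by blast
  then have "finite U" using F(1) finite_imageD by blast
  moreover have "lin_indep scH (i ` U)"
    using lin_indep_of_linear_image[OF j_linear U(2)] F(3) U(3)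
      lin_indep_linear_image[OF i_linear inj_i] by blast
  moreover have "i ` U \<subseteq> eigsp scH (assoc_op ipH i UNIV a) \<mu>" unfolding eigsp_neumann using U(1) by blast
  ultimately have "enat (card (i ` U)) \<le> cdim scH (eigsp scH (assoc_op ipH i UNIV a) \<mu>)"
    by (intro cdim_ge) auto
  also have "\<dots> = enat (card (eig_indices NN lamN \<mu>))" by (rule eig_enum_multiplicity[OF eN])
  finally show "card F \<le> card (eig_indices NN lamN \<mu>)"
    using U(2,3) card_image[OF inj_on_subset[OF inj_i subset_UNIV]] card_image[OF U(2)] by simp
qed

lemma eigenvalue_interlacing:
  assumes eN: "eig_enum scH (assoc_op ipH i UNIV a) NN lamN"
    and eD: "eig_enum scH (assoc_op ipH i {u. j u = 0} a) ND lamD"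
    and I: "\<not> (\<exists>u \<mu>. j u = 0 \<and> i u \<noteq> 0 \<and> (i u, scH \<mu> (i u)) \<in> assoc_op ipH i UNIV a)"
    and II: "\<forall>t>0. cdim scK (cspan scK (isotropic_set ipK (Ngraph ipH ipK i j a t))) = \<infinity>"
    and n: "1 \<le> n" "enat n \<le> ND" "enat (Suc n) \<le> NN"
  shows "lamN (Suc n) < lamD n"
proof (rule ccontr)
  assume "\<not> lamN (Suc n) < lamD n"
  then have "lamD n \<le> lamN (Suc n)" by simp
  obtain G where G: "finite G" "card G \<le> n" "orthonormal G" "\<forall>g\<in>G. \<exists>\<nu>. neumann_eigvec \<nu> g"
    "\<And>u. u \<in> orth_compl G \<Longrightarrow> lamN (Suc n) * (nH (i u))\<^sup>2 \<le> Re (a u u)"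
    using neumann_min_max[OF eN n(3)] by blast
  obtain Y where Y: "finite Y" "n \<le> card Y" "\<forall>y\<in>Y. j y = 0" "lin_indep scV Y"
    "\<And>c. Re (a (\<Sum>y\<in>Y. scV (c y) y) (\<Sum>y\<in>Y. scV (c y) y))
      \<le> lamD n * (nH (i (\<Sum>y\<in>Y. scV (c y) y)))\<^sup>2"
    using dirichlet_test_space[OF eD n(2)] by blast
  have "isotropic_set ipK (Ngraph ipH ipK i j a (lamD n)) \<subseteq> j ` {g. neumann_eigvec (lamD n) g}"
    using isotropic_set_subset_j_eigvecs[OF G Y \<open>lamD n \<le> lamN (Suc n)\<close> I] .
  then have "cdim scK (cspan scK (isotropic_set ipK (Ngraph ipH ipK i j a (lamD n))))
      \<le> enat (card (eig_indices NN lamN (lamD n)))"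
    by (rule cdim_cspan_j_neumann_eigvecs_le[OF eN])
  then show False using II dirichlet_eigenvalue_pos[OF eD I n(1,2)] by simp
qed

end

theorem theorem2p2:
  fixes scV :: "complex \<Rightarrow> 'v::ab_group_add \<Rightarrow> 'v" and ipV :: "'v \<Rightarrow> 'v \<Rightarrow> complex"
    and scH :: "complex \<Rightarrow> 'h::ab_group_add \<Rightarrow> 'h" and ipH :: "'h \<Rightarrow> 'h \<Rightarrow> complex"
    and scK :: "complex \<Rightarrow> 'k::ab_group_add \<Rightarrow> 'k" and ipK :: "'k \<Rightarrow> 'k \<Rightarrow> complex"
    and i :: "'v \<Rightarrow> 'h" and j :: "'v \<Rightarrow> 'k" and a :: "'v \<Rightarrow> 'v \<Rightarrow> complex"
    and VD :: "'v set" and AN AD :: "('h \<times> 'h) set"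
    and NN ND :: enat and lamN lamD :: "nat \<Rightarrow> real"
  assumes "chilbert scV ipV" and "chilbert scH ipH" and "chilbert scK ipK"
    and "clinear_map scV scH i" and "inj i" and "compact_map ipV ipH i"
    and "clinear_map scV scK j" and "compact_map ipV ipK j"
    and "sesquilinear scV a" and "positive_form a" and "symmetric_form a"
    and "continuous_form ipV a" and "elliptic_form ipV ipH i a"
    and VD: "VD = {u. j u = 0}"
    and AN: "AN = assoc_op ipH i UNIV a"
    and AD: "AD = assoc_op ipH i VD a"
    and I: "\<not> (\<exists>u \<mu>. u \<in> VD \<and> i u \<noteq> 0 \<and> (i u, scH \<mu> (i u)) \<in> AN)"
    and II: "\<forall>t>0. cdim scK (cspan scK (isotropic_set ipK (Ngraph ipH ipK i j a t))) = \<infinity>"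
    and eN: "eig_enum scH AN NN lamN" and eD: "eig_enum scH AD ND lamD"
  shows "\<forall>n\<ge>1. enat n \<le> ND \<longrightarrow> enat (Suc n) \<le> NN \<longrightarrow> lamN (Suc n) < lamD n"
proof -
  interpret form_setting scV ipV scH ipH scK ipK i j a
    using assms(1-7,9-13) by unfold_locales auto
  show ?thesis
    using eigenvalue_interlacing[OF eN[unfolded AN] eD[unfolded AD VD]] I II unfolding VD AN by blast
qed

end
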